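(* Let $(\Omega,\mathcal{F},\mathbb{P})$ be a complete probability space, $t_0<T$, $x_0$ a random variable and $a$ a stochastic process on $[t_0,T]$, and let $x(t,\omega)=x_0(\omega)\mathrm{e}^{\int_{t_0}^t a(s,\omega)\mathrm{d} s}$. Assume: (H1) $a\in \mathrm{L}^2([t_0,T]\times\Omega)$; (H2) for every $N\ge2$, $x_0$, $\xi_1$ and $(\xi_2,\ldots,\xi_N)$ are absolutely continuous and independent; (H3) the density $f_{\xi_1}$ of $\xi_1$ is Lipschitz on $\mathbb{R}$; (H4) $\int_{t_0}^t\phi_1(s)\,\mathrm{d} s\ne0$ for all $t\in(t_0,T]$. Then for each fixed $t\in(t_0,T]$, the sequence \[ f_1^N(x,t)=\int_{\mathbb{R}^N} f_0\big(x\,\mathrm{e}^{-K_a(t,\pmb{\xi}_N)}\big)f_{\pmb{\xi}_N}(\pmb{\xi}_N)\,\mathrm{e}^{-K_a(t,\pmb{\xi}_N)}\,\mathrm{d}\pmb{\xi}_N \] (where $f_0$ is the density of $x_0$) converges in $\mathrm{L}^\infty(J)$, for every $\delta>0$ and every bounded set $J\subseteq\mathbb{R}\setminus[-\delta,\delta]$, to a probability density $f_1(\cdot,t)$ of $x(t,\cdot)$.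
   Context: Karhunen–Loève expansion: for $a\in \mathrm{L}^2([t_0,T]\times\Omega)$ write $a(t,\omega)=\mu_a(t)+\sum_{j=1}^\infty\sqrt{\nu_j}\,\phi_j(t)\xi_j(\omega)$ (convergence in $\mathrm{L}^2([t_0,T]\times\Omega)$), where $\mu_a(t)=\mathbb{E}[a(t)]$, $\{(\nu_j,\phi_j)\}$ are the (nonnegative) eigenvalue/eigenfunction pairs of the covariance operator $\mathcal{C}f(t)=\int_{t_0}^T\mathrm{Cov}[a(t),a(s)]f(s)\,\mathrm{d} s$ on $\mathrm{L}^2([t_0,T])$ with $\{\phi_j\}$ an orthonormal basis, and $\xi_j$ are zero-mean, unit-variance, pairwise uncorrelated random variables; the pairs may be enumerated in any order (here $\nu_1>0$). $\pmb{\xi}_N=(\xi_1,\ldots,\xi_N)$, $f_{\pmb{\xi}_N}$ its density, $K_a(t,\pmb{\xi}_N)=\int_{t_0}^t\big(\mu_a(s)+\sum_{j=1}^N\sqrt{\nu_j}\phi_j(s)\xi_j\big)\mathrm{d} s$. *)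

theory Defs
  imports "HOL-Probability.Probability"
begin

definition proc_mean :: "'a measure \<Rightarrow> (real \<Rightarrow> 'a \<Rightarrow> real) \<Rightarrow> real \<Rightarrow> real" where
  "proc_mean M a t = (\<integral>\<omega>. a t \<omega> \<partial>M)"

definition proc_cov :: "'a measure \<Rightarrow> (real \<Rightarrow> 'a \<Rightarrow> real) \<Rightarrow> real \<Rightarrow> real \<Rightarrow> real" where
  "proc_cov M a t s =
     (\<integral>\<omega>. (a t \<omega> - proc_mean M a t) * (a s \<omega> - proc_mean M a s) \<partial>M)"

definition time_prod :: "real \<Rightarrow> real \<Rightarrow> 'a measure \<Rightarrow> (real \<times> 'a) measure" where
  "time_prod t0 T M = restrict_space lborel {t0..T} \<Otimes>\<^sub>M M"

definition L2_interval :: "real \<Rightarrow> real \<Rightarrow> (real \<Rightarrow> real) \<Rightarrow> bool" where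
  "L2_interval t0 T g \<longleftrightarrow> g \<in> borel_measurable (restrict_space lborel {t0..T})
      \<and> set_integrable lborel {t0..T} (\<lambda>s. (g s)\<^sup>2)"

text \<open>Karhunen--Loeve data for a (indices j \<ge> 1):
  (nu j, phi j) are the eigenpairs of the covariance operator, nu j \<ge> 0, the phi j form an
  orthonormal basis of L^2([t0,T]), the xi j are zero-mean, unit-variance, pairwise uncorrelated
  random variables and the series converges to a in L^2([t0,T] x Omega).\<close>
definition KL_expansion ::
  "'a measure \<Rightarrow> real \<Rightarrow> real \<Rightarrow> (real \<Rightarrow> 'a \<Rightarrow> real) \<Rightarrow> (nat \<Rightarrow> real)
     \<Rightarrow> (nat \<Rightarrow> real \<Rightarrow> real) \<Rightarrow> (nat \<Rightarrow> 'a \<Rightarrow> real) \<Rightarrow> bool" where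
  "KL_expansion M t0 T a \<nu> \<phi> \<xi> \<longleftrightarrow>
     (\<forall>j\<ge>1. \<nu> j \<ge> 0)
   \<and> (\<forall>j\<ge>1. L2_interval t0 T (\<phi> j))
   \<and> (\<forall>i\<ge>1. \<forall>j\<ge>1. (LINT s:{t0..T}|lborel. \<phi> i s * \<phi> j s) = (if i = j then 1 else 0))
   \<and> (\<forall>g. L2_interval t0 T g \<longrightarrow> (\<forall>j\<ge>1. (LINT s:{t0..T}|lborel. g s * \<phi> j s) = 0)
          \<longrightarrow> (AE s in restrict_space lborel {t0..T}. g s = 0))
   \<and> (\<forall>j\<ge>1. AE t in restrict_space lborel {t0..T}.
          (LINT s:{t0..T}|lborel. proc_cov M a t s * \<phi> j s) = \<nu> j * \<phi> j t)
   \<and> (\<forall>j\<ge>1. \<xi> j \<in> borel_measurable M \<and> integrable M (\<lambda>\<omega>. (\<xi> j \<omega>)\<^sup>2)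
          \<and> (\<integral>\<omega>. \<xi> j \<omega> \<partial>M) = 0)
   \<and> (\<forall>i\<ge>1. \<forall>j\<ge>1. (\<integral>\<omega>. \<xi> i \<omega> * \<xi> j \<omega> \<partial>M) = (if i = j then 1 else 0))
   \<and> (\<lambda>N. \<integral>p. (a (fst p) (snd p) - proc_mean M a (fst p)
              - (\<Sum>j=1..N. sqrt (\<nu> j) * \<phi> j (fst p) * \<xi> j (snd p)))\<^sup>2 \<partial>time_prod t0 T M)
       \<longlonglongrightarrow> 0"

definition K_a :: "'a measure \<Rightarrow> real \<Rightarrow> (real \<Rightarrow> 'a \<Rightarrow> real) \<Rightarrow> (nat \<Rightarrow> real)
     \<Rightarrow> (nat \<Rightarrow> real \<Rightarrow> real) \<Rightarrow> nat \<Rightarrow> real \<Rightarrow> (nat \<Rightarrow> real) \<Rightarrow> real" where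
  "K_a M t0 a \<nu> \<phi> N t y =
     (LINT s:{t0..t}|lborel. proc_mean M a s + (\<Sum>j=1..N. sqrt (\<nu> j) * \<phi> j s * y j))"

definition f1_approx :: "'a measure \<Rightarrow> real \<Rightarrow> (real \<Rightarrow> 'a \<Rightarrow> real) \<Rightarrow> (nat \<Rightarrow> real)
     \<Rightarrow> (nat \<Rightarrow> real \<Rightarrow> real) \<Rightarrow> (real \<Rightarrow> real) \<Rightarrow> (nat \<Rightarrow> (nat \<Rightarrow> real) \<Rightarrow> real)
     \<Rightarrow> nat \<Rightarrow> real \<Rightarrow> real \<Rightarrow> real" where
  "f1_approx M t0 a \<nu> \<phi> f0 fxi N x t =
     (\<integral>y. f0 (x * exp (- K_a M t0 a \<nu> \<phi> N t y)) * fxi N y * exp (- K_a M t0 a \<nu> \<phi> N t y)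
        \<partial>(\<Pi>\<^sub>M j\<in>{1..N}. lborel))"

end

theory Submission
  imports Defs
begin

text \<open>Write the truncated exponent as \<open>K\<^sub>N = c \<xi>\<^sub>1 + R\<^sub>N\<close>, where \<open>c = sqrt \<nu>\<^sub>1 \<integral>\<^sub>t\<^sub>0\<^sup>t \<phi>\<^sub>1 \<noteq> 0\<close> and
  \<open>R\<^sub>N\<close> is a function of \<open>\<xi>\<^sub>2, \<dots>, \<xi>\<^sub>N\<close>, and the exact exponent as \<open>\<integral>\<^sub>t\<^sub>0\<^sup>t a = c \<xi>\<^sub>1 + R\<close>.
  The \<open>L\<^sup>2\<close> convergence of the Karhunen--Loeve series gives \<open>R\<^sub>N \<rightarrow> R\<close> in \<open>L\<^sup>1\<close>, and the limit of an
  a.e. convergent subsequence is a version of \<open>R\<close> that is measurable for the \<open>\<sigma>\<close>-algebra of the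
  tail, hence independent of \<open>x\<^sub>0\<close> and \<open>\<xi>\<^sub>1\<close>.
  For independent \<open>X\<^sub>0\<close>, \<open>U\<close>, \<open>R\<close> the density of \<open>X\<^sub>0 exp (c U + R)\<close> at \<open>x\<close> is \<open>E \<Psi>(x, R)\<close>, where
  \<open>\<Psi>(x, r) = \<integral> f\<^sub>0 (x exp (-(c u + r))) exp (-(c u + r)) f\<^sub>U(u) du\<close>, and likewise
  \<open>f\<^sub>1\<^sup>N(x) = E \<Psi>(x, R\<^sub>N)\<close>. A Lipschitz density \<open>f\<^sub>U\<close> is bounded, and substituting \<open>v = c u + r\<close>
  shows that \<open>\<Psi>(x, \<cdot>)\<close> is Lipschitz with constant \<open>L / (c\<^sup>2 |x|)\<close>; hence
  \<open>|f\<^sub>1\<^sup>N(x) - f\<^sub>1(x)| \<le> L E|R\<^sub>N - R| / (c\<^sup>2 \<delta>)\<close> uniformly for \<open>|x| \<ge> \<delta>\<close>.\<close>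

section \<open>Densities of \<open>X\<^sub>0 exp (c U + r)\<close>\<close>

lemma lipschitz_density_bounded:
  fixes f :: "real \<Rightarrow> real"
  assumes lip: "L-lipschitz_on UNIV f" and nonneg: "\<And>x. f x \<ge> 0"
    and total: "(\<integral>\<^sup>+x. ennreal (f x) \<partial>lborel) = 1"
  shows "f x \<le> 2 * (L + 1) + 1"
proof -
  define h where "h = f x"
  define r where "r = h / (2 * (L + 1))"
  have L: "L \<ge> 0" using lipschitz_on_nonneg[OF lip] .
  then have L1: "L + 1 > 0" by simp
  have h: "h \<ge> 0" and r: "r \<ge> 0" using nonneg L by (simp_all add: h_def r_def)
  \<comment> \<open>\<open>f \<ge> h/2\<close> on an interval of length \<open>h/(L + 1)\<close>, so \<open>h\<^sup>2 \<le> 2 (L + 1)\<close>\<close>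
  have lower: "h / 2 * indicator {x - r..x + r} u \<le> f u" for u
  proof (cases "u \<in> {x - r..x + r}")
    case True
    have "\<bar>f u - h\<bar> \<le> L * \<bar>u - x\<bar>"
      using lip by (simp add: lipschitz_on_def dist_real_def h_def)
    also have "\<dots> \<le> (L + 1) * r"
      using True L by (intro mult_mono) auto
    also have "\<dots> = h / 2" using L1 by (simp add: r_def field_simps)
    finally have "h / 2 \<le> f u" by linarith
    then show ?thesis using True by simp
  next
    case False then show ?thesis using nonneg[of u] by simp
  qed
  have "ennreal (h / 2 * (2 * r)) = ennreal (h / 2) * ennreal (2 * r)"
    by (rule ennreal_mult) (use h r in auto)
  also have "\<dots> = (\<integral>\<^sup>+u. ennreal (h / 2) * indicator {x - r..x + r} u \<partial>lborel)"
    using r by (simp add: nn_integral_cmult_indicator)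
  also have "\<dots> \<le> (\<integral>\<^sup>+u. ennreal (f u) \<partial>lborel)"
    using lower h by (intro nn_integral_mono) (metis ennreal_leI ennreal_mult' indicator_mult_ennreal mult.commute)
  finally have "h * h \<le> 2 * (L + 1)"
    using total L by (simp add: ennreal_le_1 r_def field_simps)
  then have "h \<le> 2 * (L + 1) + 1"
    by (cases "h \<le> 1") (use L in \<open>auto\<close>, smt (verit) mult_le_cancel_left1)
  then show ?thesis by (simp add: h_def)
qed

lemma SUP_indicator_symmetric_Icc:
  "(SUP n::nat. ennreal (indicator {- real n..real n} s)) = 1"
proof (rule antisym)
  show "(SUP n::nat. ennreal (indicator {- real n..real n} s)) \<le> 1"
    by (rule SUP_least) (simp add: indicator_def)
  obtain n :: nat where "\<bar>s\<bar> \<le> real n" using real_arch_simple by blast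
  then show "1 \<le> (SUP n::nat. ennreal (indicator {- real n..real n} s))"
    by (intro SUP_upper2[where i=n]) (auto simp: abs_le_iff)
qed

lemma nn_integral_exp_substitution_le:
  fixes g :: "real \<Rightarrow> real"
  assumes [measurable]: "g \<in> borel_measurable borel" and nonneg: "\<And>x. g x \<ge> 0"
  shows "(\<integral>\<^sup>+s. ennreal (g (exp s) * exp s) \<partial>lborel) \<le> (\<integral>\<^sup>+w. ennreal (g w) \<partial>lborel)"
proof -
  define F where "F n s = ennreal (g (exp s) * exp s * indicator {- real n..real n} s)" for n :: nat and s
  have "incseq F"
  proof (intro incseq_SucI le_funI)
    fix n s
    have "indicator {- real n..real n} s \<le> (indicator {- real (Suc n)..real (Suc n)} s :: real)"
      by (simp add: indicator_def)
    then show "F n s \<le> F (Suc n) s"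
      unfolding F_def using nonneg by (intro ennreal_leI mult_left_mono) auto
  qed
  moreover have "(SUP n. F n s) = ennreal (g (exp s) * exp s)" for s
  proof -
    have "(SUP n. F n s)
        = (SUP n. ennreal (g (exp s) * exp s) * ennreal (indicator {- real n..real n} s))"
      unfolding F_def using nonneg by (intro SUP_cong refl) (simp add: ennreal_mult)
    also have "\<dots> = ennreal (g (exp s) * exp s)"
      by (simp only: SUP_mult_left_ennreal[symmetric] SUP_indicator_symmetric_Icc mult_1_right)
    finally show ?thesis .
  qed
  moreover have "\<And>n. F n \<in> borel_measurable lborel" unfolding F_def by measurable
  ultimately have "(\<integral>\<^sup>+s. ennreal (g (exp s) * exp s) \<partial>lborel) = (SUP n. \<integral>\<^sup>+s. F n s \<partial>lborel)"
    by (simp add: nn_integral_monotone_convergence_SUP[symmetric])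
  also have "\<dots> \<le> (\<integral>\<^sup>+w. ennreal (g w) \<partial>lborel)"
  proof (rule SUP_least)
    fix n :: nat
    have "(\<integral>\<^sup>+s. F n s \<partial>lborel)
        = (\<integral>\<^sup>+w. ennreal (g w * indicator {exp (- real n)..exp (real n)} w) \<partial>lborel)"
      unfolding F_def
    proof (rule nn_integral_substitution[where g=exp and g'=exp, symmetric])
      show "set_borel_measurable borel {exp (- real n)..exp (real n)} g"
        unfolding set_borel_measurable_def by measurable
    qed (auto intro!: derivative_eq_intros continuous_on_exp continuous_on_id)
    also have "\<dots> \<le> (\<integral>\<^sup>+w. ennreal (g w) \<partial>lborel)"
      using nonneg by (intro nn_integral_mono ennreal_leI) (auto simp: indicator_def)
    finally show "(\<integral>\<^sup>+s. F n s \<partial>lborel) \<le> (\<integral>\<^sup>+w. ennreal (g w) \<partial>lborel)" .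
  qed
  finally show ?thesis .
qed

lemma nn_integral_density_exp_scaling_pos:
  fixes f :: "real \<Rightarrow> real"
  assumes [measurable]: "f \<in> borel_measurable borel" and nonneg: "\<And>x. f x \<ge> 0"
    and total: "(\<integral>\<^sup>+w. ennreal (f w) \<partial>lborel) \<le> 1" and x: "x > 0"
  shows "(\<integral>\<^sup>+v. ennreal (f (x * exp (- v)) * exp (- v)) \<partial>lborel) \<le> ennreal (1 / x)"
proof -
  have shift: "ennreal (f (x * exp (- (ln x + -1 * s))) * exp (- (ln x + -1 * s)))
      = ennreal (1 / x) * ennreal (f (exp s) * exp s)" for s
  proof -
    have "f (x * exp (- (ln x + -1 * s))) * exp (- (ln x + -1 * s)) = 1 / x * (f (exp s) * exp s)"
      using x by (simp add: exp_diff exp_minus field_simps)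
    then show ?thesis
      by (simp only:) (rule ennreal_mult, use x nonneg in auto)
  qed
  have "(\<integral>\<^sup>+v. ennreal (f (x * exp (- v)) * exp (- v)) \<partial>lborel)
      = (\<integral>\<^sup>+s. ennreal (f (x * exp (- (ln x + -1 * s))) * exp (- (ln x + -1 * s))) \<partial>lborel)"
    by (subst nn_integral_real_affine[of _ "-1" "ln x"]) auto
  also have "\<dots> = ennreal (1 / x) * (\<integral>\<^sup>+s. ennreal (f (exp s) * exp s) \<partial>lborel)"
    unfolding shift by (rule nn_integral_cmult) measurable
  also have "\<dots> \<le> ennreal (1 / x) * 1"
    using nn_integral_exp_substitution_le[of f] nonneg total by (intro mult_left_mono) auto
  finally show ?thesis by simp
qed

lemma nn_integral_density_exp_scaling:
  fixes f :: "real \<Rightarrow> real"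
  assumes [measurable]: "f \<in> borel_measurable borel" and nonneg: "\<And>x. f x \<ge> 0"
    and total: "(\<integral>\<^sup>+w. ennreal (f w) \<partial>lborel) \<le> 1" and x: "x \<noteq> 0"
  shows "(\<integral>\<^sup>+v. ennreal (f (x * exp (- v)) * exp (- v)) \<partial>lborel) \<le> ennreal (1 / \<bar>x\<bar>)"
proof (cases "x > 0")
  case True then show ?thesis using nn_integral_density_exp_scaling_pos[OF assms(1) nonneg total] by simp
next
  case False
  have "(\<integral>\<^sup>+w. ennreal (f (- w)) \<partial>lborel) = (\<integral>\<^sup>+w. ennreal (f w) \<partial>lborel)"
    by (subst nn_integral_real_affine[of _ "-1" 0]) auto
  then have "(\<integral>\<^sup>+v. ennreal (f (- (- x * exp (- v))) * exp (- v)) \<partial>lborel) \<le> ennreal (1 / (- x))"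
    using False x nonneg total by (intro nn_integral_density_exp_scaling_pos) auto
  then show ?thesis using False by simp
qed

text \<open>The density at \<open>x\<close> of \<open>X\<^sub>0 exp (c U + r)\<close> for independent \<open>X\<^sub>0\<close> and \<open>U\<close> with densities
  \<open>f\<^sub>0\<close> and \<open>f\<^sub>U\<close>.\<close>
definition mix_density :: "(real \<Rightarrow> real) \<Rightarrow> (real \<Rightarrow> real) \<Rightarrow> real \<Rightarrow> real \<Rightarrow> real \<Rightarrow> ennreal" where
  "mix_density f0 fU c x r =
     (\<integral>\<^sup>+u. ennreal (f0 (x * exp (- (c * u + r))) * exp (- (c * u + r)) * fU u) \<partial>lborel)"

lemma measurable_mix_density[measurable]:
  assumes [measurable]: "f0 \<in> borel_measurable borel" "fU \<in> borel_measurable borel"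
    and [measurable]: "X \<in> borel_measurable N" "R \<in> borel_measurable N"
  shows "(\<lambda>w. mix_density f0 fU c (X w) (R w)) \<in> borel_measurable N"
  unfolding mix_density_def by measurable

lemma mix_density_substitution:
  fixes f0 fU :: "real \<Rightarrow> real"
  assumes [measurable]: "f0 \<in> borel_measurable borel" "fU \<in> borel_measurable borel" and c: "c \<noteq> 0"
  shows "mix_density f0 fU c x r = ennreal (1 / \<bar>c\<bar>) *
     (\<integral>\<^sup>+v. ennreal (f0 (x * exp (- v)) * exp (- v) * fU ((v - r) / c)) \<partial>lborel)"
proof -
  have "(\<integral>\<^sup>+v. ennreal (f0 (x * exp (- v)) * exp (- v) * fU ((v - r) / c)) \<partial>lborel)
      = ennreal \<bar>c\<bar> * mix_density f0 fU c x r"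
    unfolding mix_density_def using c by (subst nn_integral_real_affine[of _ c r]) (auto simp: add.commute)
  then show ?thesis
    using c by (simp add: mult.assoc[symmetric] ennreal_mult[symmetric])
qed

lemma mix_density_bound:
  fixes f0 fU :: "real \<Rightarrow> real"
  assumes [measurable]: "f0 \<in> borel_measurable borel" "fU \<in> borel_measurable borel"
    and f0_nonneg: "\<And>x. f0 x \<ge> 0" and total: "(\<integral>\<^sup>+w. ennreal (f0 w) \<partial>lborel) \<le> 1"
    and fU_le: "\<And>x. fU x \<le> B" and fU_nonneg: "\<And>x. fU x \<ge> 0" and c: "c \<noteq> 0" and x: "x \<noteq> 0"
  shows "mix_density f0 fU c x r \<le> ennreal (B / (\<bar>c\<bar> * \<bar>x\<bar>))"
proof -
  let ?q = "\<lambda>v. f0 (x * exp (- v)) * exp (- v)"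
  have B: "B \<ge> 0" using fU_le[of 0] fU_nonneg[of 0] by simp
  have "mix_density f0 fU c x r = ennreal (1 / \<bar>c\<bar>) * (\<integral>\<^sup>+v. ennreal (?q v * fU ((v - r) / c)) \<partial>lborel)"
    by (rule mix_density_substitution) (auto simp: c)
  also have "\<dots> \<le> ennreal (1 / \<bar>c\<bar>) * (\<integral>\<^sup>+v. ennreal B * ennreal (?q v) \<partial>lborel)"
  proof (intro mult_left_mono nn_integral_mono)
    fix v
    have "?q v * fU ((v - r) / c) \<le> B * ?q v"
      using mult_left_mono[OF fU_le[of "(v - r) / c"], of "?q v"] f0_nonneg[of "x * exp (- v)"]
      by (simp add: mult.commute)
    then show "ennreal (?q v * fU ((v - r) / c)) \<le> ennreal B * ennreal (?q v)"
      using B f0_nonneg by (simp add: ennreal_mult[symmetric] ennreal_leI)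
  qed simp
  also have "\<dots> = ennreal (1 / \<bar>c\<bar>) * (ennreal B * (\<integral>\<^sup>+v. ennreal (?q v) \<partial>lborel))"
    by (subst nn_integral_cmult) auto
  also have "\<dots> \<le> ennreal (1 / \<bar>c\<bar>) * (ennreal B * ennreal (1 / \<bar>x\<bar>))"
    by (intro mult_left_mono nn_integral_density_exp_scaling) (auto simp: f0_nonneg total x)
  also have "\<dots> = ennreal (B / (\<bar>c\<bar> * \<bar>x\<bar>))"
    using B by (simp add: ennreal_mult[symmetric])
  finally show ?thesis .
qed

lemma mix_density_finite:
  fixes f0 fU :: "real \<Rightarrow> real"
  assumes "f0 \<in> borel_measurable borel" "fU \<in> borel_measurable borel"
    and "\<And>x. f0 x \<ge> 0" "(\<integral>\<^sup>+w. ennreal (f0 w) \<partial>lborel) \<le> 1"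
    and "\<And>x. fU x \<le> B" "\<And>x. fU x \<ge> 0" "c \<noteq> 0" "x \<noteq> 0"
  shows "mix_density f0 fU c x r = ennreal (enn2real (mix_density f0 fU c x r))"
proof -
  have "mix_density f0 fU c x r < \<infinity>"
    using mix_density_bound[OF assms, of r] by (simp add: le_less_trans)
  then show ?thesis by (simp add: less_top[symmetric])
qed

lemma mix_density_lipschitz:
  fixes f0 fU :: "real \<Rightarrow> real"
  assumes [measurable]: "f0 \<in> borel_measurable borel" "fU \<in> borel_measurable borel"
    and f0_nonneg: "\<And>x. f0 x \<ge> 0" and total: "(\<integral>\<^sup>+w. ennreal (f0 w) \<partial>lborel) \<le> 1"
    and lip: "L-lipschitz_on UNIV fU" and fU_nonneg: "\<And>x. fU x \<ge> 0" and c: "c \<noteq> 0" and x: "x \<noteq> 0"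
  shows "mix_density f0 fU c x r \<le> mix_density f0 fU c x r' + ennreal (L * \<bar>r - r'\<bar> / (c\<^sup>2 * \<bar>x\<bar>))"
proof -
  define k where "k = L * \<bar>r - r'\<bar> / \<bar>c\<bar>"
  have k: "k \<ge> 0" using lipschitz_on_nonneg[OF lip] by (simp add: k_def)
  let ?q = "\<lambda>v. f0 (x * exp (- v)) * exp (- v)"
  have q: "?q v \<ge> 0" for v using f0_nonneg by simp
  have shift: "fU ((v - r) / c) \<le> fU ((v - r') / c) + k" for v
  proof -
    have "(v - r) / c - (v - r') / c = (r' - r) / c" using c by (simp add: field_simps)
    then have "dist ((v - r) / c) ((v - r') / c) = \<bar>r - r'\<bar> / \<bar>c\<bar>"
      by (simp add: dist_real_def abs_minus_commute)
    moreover have "dist (fU ((v - r) / c)) (fU ((v - r') / c)) \<le> L * dist ((v - r) / c) ((v - r') / c)"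
      using lip by (simp add: lipschitz_on_def)
    ultimately show ?thesis by (simp add: k_def dist_real_def abs_le_iff)
  qed
  have "mix_density f0 fU c x r = ennreal (1 / \<bar>c\<bar>) * (\<integral>\<^sup>+v. ennreal (?q v * fU ((v - r) / c)) \<partial>lborel)"
    by (rule mix_density_substitution) (auto simp: c)
  also have "\<dots> \<le> ennreal (1 / \<bar>c\<bar>) *
      (\<integral>\<^sup>+v. ennreal (?q v * fU ((v - r') / c)) + ennreal k * ennreal (?q v) \<partial>lborel)"
  proof (intro mult_left_mono nn_integral_mono)
    fix v
    have "?q v * fU ((v - r) / c) \<le> ?q v * fU ((v - r') / c) + k * ?q v"
      using mult_left_mono[OF shift q, of v] by (simp add: algebra_simps)
    then show "ennreal (?q v * fU ((v - r) / c)) \<le> ennreal (?q v * fU ((v - r') / c)) + ennreal k * ennreal (?q v)"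
      using k q[of v] fU_nonneg[of "(v - r') / c"]
      by (simp add: ennreal_mult[symmetric] ennreal_plus[symmetric] del: ennreal_plus)
  qed simp
  also have "\<dots> = ennreal (1 / \<bar>c\<bar>) * ((\<integral>\<^sup>+v. ennreal (?q v * fU ((v - r') / c)) \<partial>lborel)
      + ennreal k * (\<integral>\<^sup>+v. ennreal (?q v) \<partial>lborel))"
    by (subst nn_integral_add) (auto simp: nn_integral_cmult)
  also have "\<dots> \<le> ennreal (1 / \<bar>c\<bar>) * ((\<integral>\<^sup>+v. ennreal (?q v * fU ((v - r') / c)) \<partial>lborel)
      + ennreal k * ennreal (1 / \<bar>x\<bar>))"
    by (intro mult_left_mono add_left_mono nn_integral_density_exp_scaling) (auto simp: f0_nonneg total x)
  also have "\<dots> = mix_density f0 fU c x r' + ennreal (1 / \<bar>c\<bar>) * (ennreal k * ennreal (1 / \<bar>x\<bar>))"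
    by (subst mix_density_substitution[where r=r']) (auto simp: c distrib_left)
  also have "ennreal (1 / \<bar>c\<bar>) * (ennreal k * ennreal (1 / \<bar>x\<bar>)) = ennreal (L * \<bar>r - r'\<bar> / (c\<^sup>2 * \<bar>x\<bar>))"
  proof -
    have "c\<^sup>2 = \<bar>c\<bar> * \<bar>c\<bar>" by (simp add: power2_eq_square)
    then have "1 / \<bar>c\<bar> * (k * (1 / \<bar>x\<bar>)) = L * \<bar>r - r'\<bar> / (c\<^sup>2 * \<bar>x\<bar>)"
      by (simp add: k_def)
    then show ?thesis using k by (simp add: ennreal_mult[symmetric])
  qed
  finally show ?thesis .
qed

lemma enn2real_mix_density_lipschitz:
  fixes f0 fU :: "real \<Rightarrow> real"
  assumes "f0 \<in> borel_measurable borel" "fU \<in> borel_measurable borel"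
    and "\<And>x. f0 x \<ge> 0" "(\<integral>\<^sup>+w. ennreal (f0 w) \<partial>lborel) \<le> 1"
    and lip: "L-lipschitz_on UNIV fU" and "\<And>x. fU x \<ge> 0" and "\<And>x. fU x \<le> B" and "c \<noteq> 0" "x \<noteq> 0"
  shows "\<bar>enn2real (mix_density f0 fU c x r) - enn2real (mix_density f0 fU c x r')\<bar>
    \<le> L * \<bar>r - r'\<bar> / (c\<^sup>2 * \<bar>x\<bar>)"
proof -
  have K: "L * \<bar>r - r'\<bar> / (c\<^sup>2 * \<bar>x\<bar>) \<ge> 0" using lipschitz_on_nonneg[OF lip] by simp
  have "enn2real (mix_density f0 fU c x s) \<le> enn2real (mix_density f0 fU c x s') + L * \<bar>r - r'\<bar> / (c\<^sup>2 * \<bar>x\<bar>)"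
    if "\<bar>s - s'\<bar> = \<bar>r - r'\<bar>" for s s'
  proof -
    have "ennreal (enn2real (mix_density f0 fU c x s))
        \<le> ennreal (enn2real (mix_density f0 fU c x s')) + ennreal (L * \<bar>r - r'\<bar> / (c\<^sup>2 * \<bar>x\<bar>))"
      using mix_density_lipschitz[OF assms(1-4) lip assms(6,8,9), of s s'] that
        mix_density_finite[OF assms(1-4,7,6,8,9)] by metis
    then show ?thesis using K by (simp add: ennreal_plus[symmetric] del: ennreal_plus)
  qed
  from this[of r r'] this[of r' r] show ?thesis by (simp add: abs_minus_commute abs_le_iff)
qed

lemma measurable_compose_triple:
  assumes "(\<lambda>p. G (fst p) (fst (snd p)) (snd (snd p))) \<in> borel_measurable (borel \<Otimes>\<^sub>M borel \<Otimes>\<^sub>M borel)"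
    and [measurable]: "f \<in> borel_measurable N" "g \<in> borel_measurable N" "h \<in> borel_measurable N"
  shows "(\<lambda>x. G (f x) (g x) (h x)) \<in> borel_measurable N"
proof -
  have "(\<lambda>x. (f x, g x, h x)) \<in> N \<rightarrow>\<^sub>M (borel \<Otimes>\<^sub>M borel \<Otimes>\<^sub>M borel)" by measurable
  from measurable_compose[OF this assms(1)] show ?thesis by simp
qed

lemma distributed_real_density:
  fixes f :: "real \<Rightarrow> real"
  assumes "prob_space M" and d: "distributed M lborel X (\<lambda>x. ennreal (f x))" and nonneg: "\<And>x. f x \<ge> 0"
  shows "f \<in> borel_measurable borel" "(\<integral>\<^sup>+x. ennreal (f x) \<partial>lborel) = 1"
proof -
  have m: "(\<lambda>x. ennreal (f x)) \<in> borel_measurable borel" using d by (simp add: distributed_def)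
  then have "(\<lambda>x. enn2real (ennreal (f x))) \<in> borel_measurable borel" by measurable
  then show "f \<in> borel_measurable borel" using nonneg by simp
  have X: "X \<in> M \<rightarrow>\<^sub>M lborel" using d by (simp add: distributed_def)
  have "(\<integral>\<^sup>+x. ennreal (f x) \<partial>lborel) = emeasure (density lborel (\<lambda>x. ennreal (f x))) UNIV"
    using m by (subst emeasure_density) auto
  also have "\<dots> = emeasure (distr M lborel X) UNIV" using d by (simp add: distributed_def)
  also have "\<dots> = 1"
    using X \<open>prob_space M\<close> by (subst emeasure_distr) (auto simp: prob_space.emeasure_space_1)
  finally show "(\<integral>\<^sup>+x. ennreal (f x) \<partial>lborel) = 1" .
qed

lemma product_nn_integral_triple:
  fixes M :: "nat \<Rightarrow> real measure" and G :: "real \<Rightarrow> real \<Rightarrow> real \<Rightarrow> ennreal"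
  assumes "product_sigma_finite M" and sets_M: "\<And>i. sets (M i) = sets borel"
    and G: "(\<lambda>p. G (fst p) (fst (snd p)) (snd (snd p))) \<in> borel_measurable (borel \<Otimes>\<^sub>M borel \<Otimes>\<^sub>M borel)"
  shows "(\<integral>\<^sup>+y. G (y 0) (y 1) (y 2) \<partial>Pi\<^sub>M {0, 1, 2} M) = (\<integral>\<^sup>+r. (\<integral>\<^sup>+u. (\<integral>\<^sup>+w. G w u r \<partial>M 0) \<partial>M 1) \<partial>M 2)"
proof -
  interpret product_sigma_finite M by fact
  note [measurable (raw)] = measurable_compose_triple[OF G]
  have I: "{0, 1, 2} = insert 2 {0, 1::nat}" and J: "{0, 1::nat} = insert 1 {0}" by auto
  have sets_PiM: "sets (Pi\<^sub>M K M) = sets (Pi\<^sub>M K (\<lambda>_. borel))" for K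
    by (intro sets_PiM_cong) (auto simp: sets_M)
  have "(\<lambda>y. G (y 0) (y 1) r) \<in> borel_measurable (Pi\<^sub>M (insert 1 {0}) M)"
    and "(\<lambda>y. G (y 0) (y 1) (y 2)) \<in> borel_measurable (Pi\<^sub>M (insert 2 {0, 1}) M)" for r
    by (simp_all add: sets_PiM cong: measurable_cong_sets) measurable
  then have "(\<integral>\<^sup>+y. G (y 0) (y 1) (y 2) \<partial>Pi\<^sub>M {0, 1, 2} M)
      = (\<integral>\<^sup>+r. (\<integral>\<^sup>+u. (\<integral>\<^sup>+y. G (y 0) u r \<partial>Pi\<^sub>M {0} M) \<partial>M 1) \<partial>M 2)"
    unfolding I J
    by (subst product_nn_integral_insert_rev, simp_all, intro nn_integral_cong)
      (subst product_nn_integral_insert_rev, auto)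
  also have "\<dots> = (\<integral>\<^sup>+r. (\<integral>\<^sup>+u. (\<integral>\<^sup>+w. G w u r \<partial>M 0) \<partial>M 1) \<partial>M 2)"
    by (intro nn_integral_cong product_nn_integral_singleton)
      (simp add: measurable_cong_sets[OF sets_M refl])
  finally show ?thesis .
qed

lemma nn_integral_indep_triple:
  fixes X :: "nat \<Rightarrow> 'a \<Rightarrow> real" and G :: "real \<Rightarrow> real \<Rightarrow> real \<Rightarrow> ennreal"
  assumes "prob_space M"
    and indep: "prob_space.indep_vars M (\<lambda>_. lborel) X {0, 1, 2}"
    and d0: "distributed M lborel (X 0) (\<lambda>x. ennreal (f0 x))"
    and d1: "distributed M lborel (X 1) (\<lambda>x. ennreal (fU x))"
    and G: "(\<lambda>p. G (fst p) (fst (snd p)) (snd (snd p))) \<in> borel_measurable (borel \<Otimes>\<^sub>M borel \<Otimes>\<^sub>M borel)"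
  shows "(\<integral>\<^sup>+\<omega>. G (X 0 \<omega>) (X 1 \<omega>) (X 2 \<omega>) \<partial>M)
       = (\<integral>\<^sup>+\<omega>. (\<integral>\<^sup>+u. ennreal (fU u) * (\<integral>\<^sup>+w. ennreal (f0 w) * G w u (X 2 \<omega>) \<partial>lborel) \<partial>lborel) \<partial>M)"
proof -
  interpret prob_space M by fact
  note [measurable (raw)] = measurable_compose_triple[OF G]
  let ?I = "{0, 1, 2::nat}"
  have rv: "\<And>i. i \<in> ?I \<Longrightarrow> X i \<in> M \<rightarrow>\<^sub>M lborel"
    using indep unfolding indep_vars_def by auto
  have [measurable]: "X 2 \<in> borel_measurable M" using rv[of 2] by simp
  have [measurable]: "(\<lambda>x. ennreal (f0 x)) \<in> borel_measurable borel" "(\<lambda>x. ennreal (fU x)) \<in> borel_measurable borel"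
    using d0 d1 by (simp_all add: distributed_def)
  define P where "P i = (if i \<in> ?I then distr M lborel (X i) else lborel)" for i
  interpret P: product_sigma_finite P
  proof (rule product_sigma_finite.intro)
    fix i
    show "sigma_finite_measure (P i)"
    proof (cases "i \<in> ?I")
      case True
      then have "prob_space (P i)" unfolding P_def using rv[OF True] by (simp add: prob_space_distr)
      then show ?thesis by (simp add: prob_space_imp_sigma_finite)
    qed (simp add: P_def lborel.sigma_finite_measure_axioms)
  qed
  have "(\<integral>\<^sup>+\<omega>. G (X 0 \<omega>) (X 1 \<omega>) (X 2 \<omega>) \<partial>M)
      = (\<integral>\<^sup>+y. G (y 0) (y 1) (y 2) \<partial>distr M (Pi\<^sub>M ?I (\<lambda>_. lborel)) (\<lambda>\<omega>. \<lambda>i\<in>?I. X i \<omega>))"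
    using rv by (subst nn_integral_distr) (auto intro!: measurable_restrict)
  also have "distr M (Pi\<^sub>M ?I (\<lambda>_. lborel)) (\<lambda>\<omega>. \<lambda>i\<in>?I. X i \<omega>) = Pi\<^sub>M ?I P"
  proof -
    have "distr M (Pi\<^sub>M ?I (\<lambda>_. lborel)) (\<lambda>\<omega>. \<lambda>i\<in>?I. X i \<omega>) = Pi\<^sub>M ?I (\<lambda>i. distr M lborel (X i))"
      using indep by (subst (asm) indep_vars_iff_distr_eq_PiM') (use rv in auto)
    also have "\<dots> = Pi\<^sub>M ?I P" by (intro PiM_cong) (auto simp: P_def)
    finally show ?thesis .
  qed
  also have "(\<integral>\<^sup>+y. G (y 0) (y 1) (y 2) \<partial>Pi\<^sub>M ?I P) = (\<integral>\<^sup>+r. (\<integral>\<^sup>+u. (\<integral>\<^sup>+w. G w u r \<partial>P 0) \<partial>P 1) \<partial>P 2)"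
    by (rule product_nn_integral_triple[OF P.product_sigma_finite_axioms _ G]) (simp add: P_def)
  also have "\<dots> = (\<integral>\<^sup>+\<omega>. (\<integral>\<^sup>+u. ennreal (fU u) * (\<integral>\<^sup>+w. ennreal (f0 w) * G w u (X 2 \<omega>) \<partial>lborel) \<partial>lborel) \<partial>M)"
    using d0 d1 by (simp add: P_def distributed_def nn_integral_distr nn_integral_density)
  finally show ?thesis .
qed

lemma nn_integral_indicator_scaled_density:
  fixes f0 :: "real \<Rightarrow> real"
  assumes [measurable]: "f0 \<in> borel_measurable borel" "A \<in> sets borel" and nonneg: "\<And>x. f0 x \<ge> 0"
  shows "(\<integral>\<^sup>+w. ennreal (f0 w) * indicator A (w * exp k) \<partial>lborel)
       = (\<integral>\<^sup>+x. indicator A x * ennreal (f0 (x * exp (- k)) * exp (- k)) \<partial>lborel)"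
proof -
  have "(\<integral>\<^sup>+x. indicator A x * ennreal (f0 (x * exp (- k)) * exp (- k)) \<partial>lborel)
      = ennreal (exp k) * (\<integral>\<^sup>+w. indicator A (exp k * w) * ennreal (f0 w * exp (- k)) \<partial>lborel)"
    using nn_integral_real_affine[of "\<lambda>x. indicator A x * ennreal (f0 (x * exp (- k)) * exp (- k))" "exp k" 0]
    by (simp add: exp_minus field_simps)
  also have "\<dots> = (\<integral>\<^sup>+w. indicator A (exp k * w) * (ennreal (exp k) * ennreal (f0 w * exp (- k))) \<partial>lborel)"
    by (subst nn_integral_cmult[symmetric]) (auto simp: mult.left_commute)
  also have "\<dots> = (\<integral>\<^sup>+w. ennreal (f0 w) * indicator A (w * exp k) \<partial>lborel)"
  proof (intro nn_integral_cong)
    fix w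
    have "ennreal (exp k) * ennreal (f0 w * exp (- k)) = ennreal (f0 w)"
      using nonneg[of w] by (simp add: ennreal_mult[symmetric] exp_minus field_simps)
    then show "indicator A (exp k * w) * (ennreal (exp k) * ennreal (f0 w * exp (- k)))
        = ennreal (f0 w) * indicator A (w * exp k)"
      by (simp add: mult.commute)
  qed
  finally show ?thesis ..
qed

lemma nn_integral_indicator_mult_exp:
  fixes f0 fU :: "real \<Rightarrow> real"
  assumes [measurable]: "f0 \<in> borel_measurable borel" "fU \<in> borel_measurable borel" "A \<in> sets borel"
    and "\<And>x. f0 x \<ge> 0" "\<And>x. fU x \<ge> 0"
  shows "(\<integral>\<^sup>+u. ennreal (fU u) * (\<integral>\<^sup>+w. ennreal (f0 w) * indicator A (w * exp (c * u + r)) \<partial>lborel) \<partial>lborel)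
       = (\<integral>\<^sup>+x. indicator A x * mix_density f0 fU c x r \<partial>lborel)"
proof -
  have "(\<integral>\<^sup>+u. ennreal (fU u) * (\<integral>\<^sup>+w. ennreal (f0 w) * indicator A (w * exp (c * u + r)) \<partial>lborel) \<partial>lborel)
      = (\<integral>\<^sup>+u. (\<integral>\<^sup>+x. indicator A x *
          ennreal (f0 (x * exp (- (c * u + r))) * exp (- (c * u + r)) * fU u) \<partial>lborel) \<partial>lborel)"
    using assms
    by (intro nn_integral_cong)
      (simp add: nn_integral_indicator_scaled_density nn_integral_cmult[symmetric] ennreal_mult mult_ac)
  also have "\<dots> = (\<integral>\<^sup>+x. (\<integral>\<^sup>+u. indicator A x *
          ennreal (f0 (x * exp (- (c * u + r))) * exp (- (c * u + r)) * fU u) \<partial>lborel) \<partial>lborel)"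
    by (rule lborel_pair.Fubini') measurable
  also have "\<dots> = (\<integral>\<^sup>+x. indicator A x * mix_density f0 fU c x r \<partial>lborel)"
    unfolding mix_density_def by (intro nn_integral_cong, subst nn_integral_cmult) auto
  finally show ?thesis .
qed

lemma distr_mult_exp_indep:
  fixes x0 U R :: "'a \<Rightarrow> real"
  assumes M: "prob_space M"
    and indep: "prob_space.indep_vars M (\<lambda>_. lborel) (\<lambda>k. if k = 0 then x0 else if k = 1 then U else R) {0, 1, 2::nat}"
    and d0: "distributed M lborel x0 (\<lambda>x. ennreal (f0 x))" and f0_nonneg: "\<And>x. f0 x \<ge> 0"
    and d1: "distributed M lborel U (\<lambda>x. ennreal (fU x))" and fU_nonneg: "\<And>x. fU x \<ge> 0"
  shows "distr M lborel (\<lambda>\<omega>. x0 \<omega> * exp (c * U \<omega> + R \<omega>))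
       = density lborel (\<lambda>x. \<integral>\<^sup>+\<omega>. mix_density f0 fU c x (R \<omega>) \<partial>M)"
proof (rule measure_eqI)
  interpret prob_space M by fact
  define X where "X = (\<lambda>k::nat. if k = 0 then x0 else if k = 1 then U else R)"
  have rv: "\<And>i. i \<in> {0,1,2} \<Longrightarrow> X i \<in> M \<rightarrow>\<^sub>M lborel"
    using indep unfolding indep_vars_def X_def by auto
  have [measurable]: "x0 \<in> borel_measurable M" "U \<in> borel_measurable M" "R \<in> borel_measurable M"
    using rv[of 0] rv[of 1] rv[of 2] by (auto simp: X_def)
  have [measurable]: "f0 \<in> borel_measurable borel" "fU \<in> borel_measurable borel"
    using distributed_real_density[OF M d0 f0_nonneg] distributed_real_density[OF M d1 fU_nonneg] by auto
  fix A assume "A \<in> sets (distr M lborel (\<lambda>\<omega>. x0 \<omega> * exp (c * U \<omega> + R \<omega>)))"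
  then have [measurable]: "A \<in> sets borel" by simp
  have "emeasure (distr M lborel (\<lambda>\<omega>. x0 \<omega> * exp (c * U \<omega> + R \<omega>))) A
      = (\<integral>\<^sup>+\<omega>. indicator A (X 0 \<omega> * exp (c * X 1 \<omega> + X 2 \<omega>)) \<partial>M)"
    by (subst emeasure_distr) (auto simp: X_def nn_integral_indicator[symmetric] indicator_def
        intro!: nn_integral_cong)
  also have "\<dots> = (\<integral>\<^sup>+\<omega>. (\<integral>\<^sup>+u. ennreal (fU u) *
      (\<integral>\<^sup>+w. ennreal (f0 w) * indicator A (w * exp (c * u + R \<omega>)) \<partial>lborel) \<partial>lborel) \<partial>M)"
    by (subst nn_integral_indep_triple[OF M indep[folded X_def]]) (auto simp: X_def d0 d1)
  also have "\<dots> = (\<integral>\<^sup>+\<omega>. (\<integral>\<^sup>+x. indicator A x * mix_density f0 fU c x (R \<omega>) \<partial>lborel) \<partial>M)"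
    by (simp add: nn_integral_indicator_mult_exp f0_nonneg fU_nonneg)
  also have "\<dots> = (\<integral>\<^sup>+x. (\<integral>\<^sup>+\<omega>. indicator A x * mix_density f0 fU c x (R \<omega>) \<partial>M) \<partial>lborel)"
    by (rule pair_sigma_finite.Fubini'[OF pair_sigma_finite.intro[OF lborel.sigma_finite_measure_axioms
          prob_space_imp_sigma_finite[OF M]]]) measurable
  also have "\<dots> = emeasure (density lborel (\<lambda>x. \<integral>\<^sup>+\<omega>. mix_density f0 fU c x (R \<omega>) \<partial>M)) A"
    by (subst emeasure_density) (auto intro!: nn_integral_cong simp: nn_integral_cmult mult.commute)
  finally show "emeasure (distr M lborel (\<lambda>\<omega>. x0 \<omega> * exp (c * U \<omega> + R \<omega>))) A
      = emeasure (density lborel (\<lambda>x. \<integral>\<^sup>+\<omega>. mix_density f0 fU c x (R \<omega>) \<partial>M)) A" .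
qed simp

lemma distributed_mult_exp_indep:
  fixes x0 U R :: "'a \<Rightarrow> real"
  assumes M: "prob_space M"
    and indep: "prob_space.indep_vars M (\<lambda>_. lborel) (\<lambda>k. if k = 0 then x0 else if k = 1 then U else R) {0, 1, 2::nat}"
    and d0: "distributed M lborel x0 (\<lambda>x. ennreal (f0 x))" and f0_nonneg: "\<And>x. f0 x \<ge> 0"
    and d1: "distributed M lborel U (\<lambda>x. ennreal (fU x))" and fU_nonneg: "\<And>x. fU x \<ge> 0"
    and fU_le: "\<And>x. fU x \<le> B" and c: "c \<noteq> 0"
  shows "distributed M lborel (\<lambda>\<omega>. x0 \<omega> * exp (c * U \<omega> + R \<omega>))
           (\<lambda>x. ennreal (enn2real (\<integral>\<^sup>+\<omega>. mix_density f0 fU c x (R \<omega>) \<partial>M)))"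
proof -
  interpret prob_space M by fact
  define F where "F x = (\<integral>\<^sup>+\<omega>. mix_density f0 fU c x (R \<omega>) \<partial>M)" for x
  have [measurable]: "x0 \<in> borel_measurable M" "U \<in> borel_measurable M" "R \<in> borel_measurable M"
    using indep unfolding indep_vars_def by (auto dest!: bspec[where x=0] bspec[where x=1] bspec[where x=2])
  have [measurable]: "f0 \<in> borel_measurable borel" "fU \<in> borel_measurable borel"
    and total: "(\<integral>\<^sup>+x. ennreal (f0 x) \<partial>lborel) = 1"
    using distributed_real_density[OF M d0 f0_nonneg] distributed_real_density[OF M d1 fU_nonneg] by auto
  have [measurable]: "F \<in> borel_measurable borel" unfolding F_def by measurable
  \<comment> \<open>\<open>F\<close> may be infinite at \<open>0\<close>, a null set\<close>
  have finite: "F x = ennreal (enn2real (F x))" if "x \<noteq> 0" for x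
  proof -
    have "F x \<le> (\<integral>\<^sup>+\<omega>. ennreal (B / (\<bar>c\<bar> * \<bar>x\<bar>)) \<partial>M)"
      unfolding F_def using total
      by (intro nn_integral_mono mix_density_bound) (auto simp: f0_nonneg fU_le fU_nonneg c that)
    also have "\<dots> < \<infinity>" by (simp add: emeasure_space_1)
    finally show ?thesis by (simp add: less_top[symmetric])
  qed
  have "AE x in lborel. F x = ennreal (enn2real (F x))"
    using AE_lborel_singleton[of 0] by (rule AE_mp) (auto intro!: AE_I2 finite)
  then have "density lborel F = density lborel (\<lambda>x. ennreal (enn2real (F x)))"
    by (intro density_cong) auto
  then show ?thesis
    using distr_mult_exp_indep[OF M indep d0 f0_nonneg d1 fU_nonneg, of c]
    unfolding distributed_def F_def by simp
qed

lemma nn_integral_indep_eq_mix_density: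
  fixes x0 U R :: "'a \<Rightarrow> real"
  assumes M: "prob_space M"
    and indep: "prob_space.indep_vars M (\<lambda>_. lborel) (\<lambda>k. if k = 0 then x0 else if k = 1 then U else R) {0, 1, 2::nat}"
    and d0: "distributed M lborel x0 (\<lambda>x. ennreal (f0 x))" and f0_nonneg: "\<And>x. f0 x \<ge> 0"
    and d1: "distributed M lborel U (\<lambda>x. ennreal (fU x))" and fU_nonneg: "\<And>x. fU x \<ge> 0"
  shows "(\<integral>\<^sup>+\<omega>. ennreal (f0 (x * exp (- (c * U \<omega> + R \<omega>))) * exp (- (c * U \<omega> + R \<omega>))) \<partial>M)
       = (\<integral>\<^sup>+\<omega>. mix_density f0 fU c x (R \<omega>) \<partial>M)"
proof -
  define X where "X = (\<lambda>k::nat. if k = 0 then x0 else if k = 1 then U else R)"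
  have [measurable]: "f0 \<in> borel_measurable borel" "fU \<in> borel_measurable borel"
    and total: "(\<integral>\<^sup>+x. ennreal (f0 x) \<partial>lborel) = 1"
    using distributed_real_density[OF M d0 f0_nonneg] distributed_real_density[OF M d1 fU_nonneg] by auto
  let ?g = "\<lambda>u r. ennreal (f0 (x * exp (- (c * u + r))) * exp (- (c * u + r)))"
  \<comment> \<open>the integrand does not depend on \<open>x\<^sub>0\<close>, which integrates out to 1\<close>
  have "(\<integral>\<^sup>+\<omega>. ?g (U \<omega>) (R \<omega>) \<partial>M) = (\<integral>\<^sup>+\<omega>. (\<lambda>w u r. ?g u r) (X 0 \<omega>) (X 1 \<omega>) (X 2 \<omega>) \<partial>M)"
    by (simp add: X_def)
  also have "\<dots> = (\<integral>\<^sup>+\<omega>. (\<integral>\<^sup>+u. ennreal (fU u) * (\<integral>\<^sup>+w. ennreal (f0 w) * ?g u (R \<omega>) \<partial>lborel) \<partial>lborel) \<partial>M)"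
    by (subst nn_integral_indep_triple[OF M indep[folded X_def]]) (auto simp: X_def d0 d1)
  also have "\<dots> = (\<integral>\<^sup>+\<omega>. mix_density f0 fU c x (R \<omega>) \<partial>M)"
    unfolding mix_density_def using total f0_nonneg fU_nonneg
    by (intro nn_integral_cong) (simp add: nn_integral_multc ennreal_mult mult_ac)
  finally show ?thesis .
qed

lemma expectation_mix_density_lipschitz:
  fixes S S' :: "'a \<Rightarrow> real"
  assumes M: "prob_space M"
    and [measurable]: "f0 \<in> borel_measurable borel" "fU \<in> borel_measurable borel"
    and f0_nonneg: "\<And>x. f0 x \<ge> 0" and total: "(\<integral>\<^sup>+w. ennreal (f0 w) \<partial>lborel) \<le> 1"
    and lip: "L-lipschitz_on UNIV fU" and fU_nonneg: "\<And>x. fU x \<ge> 0" and fU_le: "\<And>x. fU x \<le> B"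
    and c: "c \<noteq> 0" and x: "x \<noteq> 0"
    and [measurable]: "S \<in> borel_measurable M" "S' \<in> borel_measurable M"
    and int: "integrable M (\<lambda>\<omega>. S \<omega> - S' \<omega>)"
  shows "\<bar>enn2real (\<integral>\<^sup>+\<omega>. mix_density f0 fU c x (S \<omega>) \<partial>M) - enn2real (\<integral>\<^sup>+\<omega>. mix_density f0 fU c x (S' \<omega>) \<partial>M)\<bar>
    \<le> L / (c\<^sup>2 * \<bar>x\<bar>) * (\<integral>\<omega>. \<bar>S \<omega> - S' \<omega>\<bar> \<partial>M)"
proof -
  interpret prob_space M by fact
  let ?psi = "\<lambda>r. enn2real (mix_density f0 fU c x r)"
  note finite = mix_density_finite[OF assms(2-5) fU_le fU_nonneg c x]
  have expectation: "enn2real (\<integral>\<^sup>+\<omega>. mix_density f0 fU c x (T \<omega>) \<partial>M) = (\<integral>\<omega>. ?psi (T \<omega>) \<partial>M)"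
    and integrable: "integrable M (\<lambda>\<omega>. ?psi (T \<omega>))"
    if [measurable]: "T \<in> borel_measurable M" for T
  proof -
    show "integrable M (\<lambda>\<omega>. ?psi (T \<omega>))"
    proof (rule integrable_const_bound[where B="B / (\<bar>c\<bar> * \<bar>x\<bar>)"])
      show "AE \<omega> in M. norm (?psi (T \<omega>)) \<le> B / (\<bar>c\<bar> * \<bar>x\<bar>)"
        using mix_density_bound[OF assms(2-5) fU_le fU_nonneg c x] finite
        by (intro AE_I2) (metis enn2real_leI enn2real_nonneg norm_of_real real_norm_def abs_of_nonneg
            divide_nonneg_nonneg mult_nonneg_nonneg abs_ge_zero order_trans fU_le fU_nonneg)
    qed measurable
    show "enn2real (\<integral>\<^sup>+\<omega>. mix_density f0 fU c x (T \<omega>) \<partial>M) = (\<integral>\<omega>. ?psi (T \<omega>) \<partial>M)"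
      by (subst integral_eq_nn_integral) (auto simp flip: finite)
  qed
  have "\<bar>(\<integral>\<omega>. ?psi (S \<omega>) \<partial>M) - (\<integral>\<omega>. ?psi (S' \<omega>) \<partial>M)\<bar> = \<bar>\<integral>\<omega>. ?psi (S \<omega>) - ?psi (S' \<omega>) \<partial>M\<bar>"
    by (simp add: integrable)
  also have "\<dots> \<le> (\<integral>\<omega>. L / (c\<^sup>2 * \<bar>x\<bar>) * \<bar>S \<omega> - S' \<omega>\<bar> \<partial>M)"
    using enn2real_mix_density_lipschitz[OF assms(2-5) lip fU_nonneg fU_le c x] int
    by (intro integral_abs_bound[THEN order_trans] integral_mono)
      (auto intro!: integrable integrable_abs Bochner_Integration.integrable_diff)
  finally show ?thesis by (simp add: expectation)
qed

text \<open>The mixture density is Lipschitz in the shift with constant \<open>L / (c\<^sup>2 |x|)\<close>, so \<open>L\<^sup>1\<close>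
  convergence of the shifts gives uniform convergence of the densities on \<open>|x| \<ge> \<delta>\<close>.\<close>
lemma density_mult_exp_approximation:
  fixes x0 U R :: "'a \<Rightarrow> real" and RN :: "nat \<Rightarrow> 'a \<Rightarrow> real"
  assumes M: "prob_space M"
    and indep: "prob_space.indep_vars M (\<lambda>_. lborel) (\<lambda>k. if k = 0 then x0 else if k = 1 then U else R) {0, 1, 2::nat}"
    and indepN: "\<And>N. N \<ge> N0 \<Longrightarrow>
      prob_space.indep_vars M (\<lambda>_. lborel) (\<lambda>k. if k = 0 then x0 else if k = 1 then U else RN N) {0, 1, 2::nat}"
    and d0: "distributed M lborel x0 (\<lambda>x. ennreal (f0 x))" and f0_nonneg: "\<And>x. f0 x \<ge> 0"
    and d1: "distributed M lborel U (\<lambda>x. ennreal (fU x))" and fU_nonneg: "\<And>x. fU x \<ge> 0"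
    and lip: "L-lipschitz_on UNIV fU" and c: "c \<noteq> 0"
    and int: "\<And>N. N \<ge> N0 \<Longrightarrow> integrable M (\<lambda>\<omega>. RN N \<omega> - R \<omega>)"
    and conv: "(\<lambda>N. \<integral>\<omega>. \<bar>RN N \<omega> - R \<omega>\<bar> \<partial>M) \<longlonglongrightarrow> 0"
  obtains f1 where "\<And>x. f1 x \<ge> 0"
    and "distributed M lborel (\<lambda>\<omega>. x0 \<omega> * exp (c * U \<omega> + R \<omega>)) (\<lambda>x. ennreal (f1 x))"
    and "\<And>\<delta> \<epsilon>. \<delta> > 0 \<Longrightarrow> \<epsilon> > 0 \<Longrightarrow> \<forall>\<^sub>F N in sequentially. \<forall>x. \<bar>x\<bar> \<ge> \<delta> \<longrightarrow>
      \<bar>enn2real (\<integral>\<^sup>+\<omega>. ennreal (f0 (x * exp (- (c * U \<omega> + RN N \<omega>))) * exp (- (c * U \<omega> + RN N \<omega>))) \<partial>M)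
        - f1 x\<bar> \<le> \<epsilon>"
proof
  interpret prob_space M by fact
  define B where "B = 2 * (L + 1) + 1"
  have [measurable]: "f0 \<in> borel_measurable borel" "fU \<in> borel_measurable borel"
    and total: "(\<integral>\<^sup>+x. ennreal (f0 x) \<partial>lborel) = 1" "(\<integral>\<^sup>+x. ennreal (fU x) \<partial>lborel) = 1"
    using distributed_real_density[OF M d0 f0_nonneg] distributed_real_density[OF M d1 fU_nonneg] by auto
  have fU_le: "fU x \<le> B" for x
    unfolding B_def using lip fU_nonneg total(2) by (rule lipschitz_density_bounded)
  have L: "L \<ge> 0" using lipschitz_on_nonneg[OF lip] .
  have [measurable]: "R \<in> borel_measurable M" "RN N \<in> borel_measurable M" if "N \<ge> N0" for N
    using indep indepN[OF that] unfolding indep_vars_def by (auto dest!: bspec[where x=2])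
  show "distributed M lborel (\<lambda>\<omega>. x0 \<omega> * exp (c * U \<omega> + R \<omega>))
      (\<lambda>x. ennreal (enn2real (\<integral>\<^sup>+\<omega>. mix_density f0 fU c x (R \<omega>) \<partial>M)))"
    using distributed_mult_exp_indep[OF M indep d0 f0_nonneg d1 fU_nonneg fU_le c] .
  fix \<delta> \<epsilon> :: real assume \<delta>: "\<delta> > 0" and \<epsilon>: "\<epsilon> > 0"
  define \<eta> where "\<eta> = \<epsilon> * c\<^sup>2 * \<delta> / (L + 1)"
  have "\<eta> > 0" using \<epsilon> \<delta> c L by (simp add: \<eta>_def)
  with conv have "\<forall>\<^sub>F N in sequentially. (\<integral>\<omega>. \<bar>RN N \<omega> - R \<omega>\<bar> \<partial>M) < \<eta>"
    by (rule order_tendstoD(2))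
  then show "\<forall>\<^sub>F N in sequentially. \<forall>x. \<bar>x\<bar> \<ge> \<delta> \<longrightarrow>
      \<bar>enn2real (\<integral>\<^sup>+\<omega>. ennreal (f0 (x * exp (- (c * U \<omega> + RN N \<omega>))) * exp (- (c * U \<omega> + RN N \<omega>))) \<partial>M)
        - enn2real (\<integral>\<^sup>+\<omega>. mix_density f0 fU c x (R \<omega>) \<partial>M)\<bar> \<le> \<epsilon>"
    using eventually_ge_at_top[of N0]
  proof eventually_elim
    case (elim N)
    show ?case
    proof (intro allI impI)
      fix x :: real assume x\<delta>: "\<bar>x\<bar> \<ge> \<delta>"
      then have x: "x \<noteq> 0" using \<delta> by auto
      have "\<bar>enn2real (\<integral>\<^sup>+\<omega>. ennreal (f0 (x * exp (- (c * U \<omega> + RN N \<omega>))) * exp (- (c * U \<omega> + RN N \<omega>))) \<partial>M)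
          - enn2real (\<integral>\<^sup>+\<omega>. mix_density f0 fU c x (R \<omega>) \<partial>M)\<bar>
          \<le> L / (c\<^sup>2 * \<bar>x\<bar>) * (\<integral>\<omega>. \<bar>RN N \<omega> - R \<omega>\<bar> \<partial>M)"
        unfolding nn_integral_indep_eq_mix_density[OF M indepN[OF elim(2)] d0 f0_nonneg d1 fU_nonneg]
        using total elim(2)
        by (intro expectation_mix_density_lipschitz[OF M _ _ f0_nonneg _ lip fU_nonneg fU_le c x] int) auto
      also have "\<dots> \<le> L / (c\<^sup>2 * \<bar>x\<bar>) * \<eta>"
        using elim(1) L by (intro mult_left_mono) auto
      also have "\<dots> = (L / (L + 1)) * (\<delta> / \<bar>x\<bar>) * \<epsilon>"
        using c x L by (simp add: \<eta>_def field_simps power2_eq_square)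
      also have "\<dots> \<le> 1 * 1 * \<epsilon>"
        using L x\<delta> \<delta> \<epsilon> by (intro mult_right_mono mult_mono) (auto simp: field_simps)
      finally show "\<bar>enn2real (\<integral>\<^sup>+\<omega>. ennreal (f0 (x * exp (- (c * U \<omega> + RN N \<omega>))) * exp (- (c * U \<omega> + RN N \<omega>))) \<partial>M)
          - enn2real (\<integral>\<^sup>+\<omega>. mix_density f0 fU c x (R \<omega>) \<partial>M)\<bar> \<le> \<epsilon>" by simp
    qed
  qed
qed simp

section \<open>Independence of the tail of the expansion\<close>

lemma Int_stable_vimage: "Int_stable {X -` A \<inter> space M | A. A \<in> sets K}"
  unfolding Int_stable_def
proof (intro ballI)
  fix a b assume "a \<in> {X -` A \<inter> space M | A. A \<in> sets K}" "b \<in> {X -` A \<inter> space M | A. A \<in> sets K}"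
  then obtain A B where "A \<in> sets K" "B \<in> sets K" "a = X -` A \<inter> space M" "b = X -` B \<inter> space M" by auto
  then show "a \<inter> b \<in> {X -` A \<inter> space M | A. A \<in> sets K}"
    by (intro CollectI exI[of _ "A \<inter> B"]) auto
qed

lemma vimage_events_compose_subset:
  assumes Y: "Y \<in> M \<rightarrow>\<^sub>M N" and f: "f \<in> N \<rightarrow>\<^sub>M K" and X: "\<And>\<omega>. \<omega> \<in> space M \<Longrightarrow> X \<omega> = f (Y \<omega>)"
  shows "{X -` A \<inter> space M | A. A \<in> sets K} \<subseteq> {Y -` B \<inter> space M | B. B \<in> sets N}"
proof
  fix E assume "E \<in> {X -` A \<inter> space M | A. A \<in> sets K}"
  then obtain A where A: "A \<in> sets K" "E = X -` A \<inter> space M" by auto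
  have "f -` A \<inter> space N \<in> sets N" using f A(1) by (rule measurable_sets)
  moreover have "E = Y -` (f -` A \<inter> space N) \<inter> space M"
    using A(2) X measurable_space[OF Y] by auto
  ultimately show "E \<in> {Y -` B \<inter> space M | B. B \<in> sets N}" by blast
qed

locale block_independence =
  fixes M :: "'a measure" and x0 :: "'a \<Rightarrow> real" and \<xi> :: "nat \<Rightarrow> 'a \<Rightarrow> real"
  assumes prob: "prob_space M"
    and blocks_indep: "\<forall>N\<ge>2. prob_space.indep_vars M
              (\<lambda>k::nat. \<Pi>\<^sub>M j\<in>(if k = 0 then {0} else if k = 1 then {1} else {2..N}). lborel)
              (\<lambda>k \<omega>. \<lambda>j\<in>(if k = 0 then {0} else if k = 1 then {1} else {2..N}).
                   (if j = 0 then x0 \<omega> else \<xi> j \<omega>))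
              {0, 1, 2}"
begin

definition block :: "nat \<Rightarrow> nat \<Rightarrow> nat set" where
  "block N k = (if k = 0 then {0} else if k = 1 then {1} else {2..N})"

definition block_var :: "nat \<Rightarrow> nat \<Rightarrow> 'a \<Rightarrow> nat \<Rightarrow> real" where
  "block_var N k \<omega> = (\<lambda>j\<in>block N k. if j = 0 then x0 \<omega> else \<xi> j \<omega>)"

definition tail :: "nat \<Rightarrow> 'a \<Rightarrow> nat \<Rightarrow> real" where
  "tail N \<omega> = (\<lambda>j\<in>{2..N}. \<xi> j \<omega>)"

lemma indep_vars_block_var:
  "N \<ge> 2 \<Longrightarrow> prob_space.indep_vars M (\<lambda>k. \<Pi>\<^sub>M j\<in>block N k. lborel) (block_var N) {0, 1, 2}"
  using blocks_indep unfolding block_def block_var_def by presburger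

lemma measurable_block_var:
  "N \<ge> 2 \<Longrightarrow> k \<in> {0, 1, 2} \<Longrightarrow> block_var N k \<in> M \<rightarrow>\<^sub>M (\<Pi>\<^sub>M j\<in>block N k. lborel)"
  using indep_vars_block_var prob by (auto simp: prob_space.indep_vars_def2)

lemma block_var_tail: "block_var N 2 = tail N"
  by (intro ext) (auto simp: block_var_def tail_def block_def)

lemma measurable_tail[measurable]: "tail N \<in> M \<rightarrow>\<^sub>M (\<Pi>\<^sub>M j\<in>{2..N}. lborel)"
proof (cases "N \<ge> 2")
  case True then show ?thesis
    using measurable_block_var[of N 2] by (simp add: block_var_tail block_def)
next
  case False
  then have "tail N = (\<lambda>_. \<lambda>j\<in>{}. 0)" by (auto simp: tail_def fun_eq_iff)
  then show ?thesis using False by simp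
qed

lemma measurable_block_component: "k \<in> {0, 1} \<Longrightarrow> (\<lambda>\<omega>. block_var 2 k \<omega> k) \<in> borel_measurable M"
  using measurable_compose[OF measurable_block_var[of 2 k] measurable_component_singleton[of k]]
  by (auto simp: block_def)

lemma measurable_x0_xi1[measurable]: "x0 \<in> borel_measurable M" "\<xi> 1 \<in> borel_measurable M"
  using measurable_block_component[of 0] measurable_block_component[of 1]
  by (simp_all add: block_var_def block_def)

lemma indep_vars_tail_function:
  assumes N: "N \<ge> 2" and h: "h \<in> borel_measurable (\<Pi>\<^sub>M j\<in>{2..N}. lborel)"
  shows "prob_space.indep_vars M (\<lambda>_. lborel)
    (\<lambda>k. if k = 0 then x0 else if k = 1 then \<xi> 1 else (\<lambda>\<omega>. h (tail N \<omega>))) {0, 1, 2::nat}"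
proof -
  interpret prob_space M by (rule prob)
  let ?Y = "\<lambda>k::nat. if k = 0 then (\<lambda>y. y 0) else if k = 1 then (\<lambda>y::nat \<Rightarrow> real. y 1) else h"
  have "indep_vars (\<lambda>_. lborel) (\<lambda>k \<omega>. ?Y k (block_var N k \<omega>)) {0, 1, 2}"
  proof (rule indep_vars_compose2[OF indep_vars_block_var[OF N]])
    fix k :: nat assume "k \<in> {0, 1, 2}"
    then show "?Y k \<in> (\<Pi>\<^sub>M j\<in>block N k. lborel) \<rightarrow>\<^sub>M lborel"
      using h by (auto simp: block_def)
  qed
  moreover have "(\<lambda>k \<omega>. ?Y k (block_var N k \<omega>)) k = (if k = 0 then x0 else if k = 1 then \<xi> 1 else (\<lambda>\<omega>. h (tail N \<omega>)))"
    if "k \<in> {0, 1, 2}" for k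
    using that by (auto simp: block_var_tail) (auto simp: block_var_def block_def)
  ultimately show ?thesis
    by (rule indep_vars_cong[OF refl _ refl, THEN iffD1, rotated]) auto
qed


definition tail_block_events :: "nat \<Rightarrow> 'a set set" where
  "tail_block_events N = {tail N -` B \<inter> space M | B. B \<in> sets (\<Pi>\<^sub>M j\<in>{2..N}. (lborel :: real measure))}"

text \<open>Int-stable generators of the \<open>\<sigma>\<close>-algebras of \<open>x\<^sub>0\<close>, of \<open>\<xi>\<^sub>1\<close> and of the whole tail
  \<open>(\<xi>\<^sub>2, \<xi>\<^sub>3, \<dots>)\<close>; each event involves only finitely many \<open>\<xi>\<^sub>j\<close>.\<close>
definition limit_events :: "nat \<Rightarrow> 'a set set" where
  "limit_events k =
    (if k = 0 then {x0 -` A \<inter> space M | A. A \<in> sets (lborel :: real measure)}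
     else if k = 1 then {\<xi> 1 -` A \<inter> space M | A. A \<in> sets (lborel :: real measure)}
     else (\<Union>N\<in>{2..}. tail_block_events N))"

lemma tail_block_events_mono: "N \<le> K \<Longrightarrow> tail_block_events N \<subseteq> tail_block_events K"
  unfolding tail_block_events_def
  by (rule vimage_events_compose_subset[where f="\<lambda>y. restrict y {2..N}"])
     (auto intro!: measurable_restrict_subset simp: tail_def)

lemma Int_stable_limit_events: "Int_stable (limit_events k)"
proof -
  have "Int_stable (\<Union>N\<in>{2..}. tail_block_events N)"
    unfolding Int_stable_def
  proof (intro ballI)
    fix a b assume "a \<in> (\<Union>N\<in>{2..}. tail_block_events N)" "b \<in> (\<Union>N\<in>{2..}. tail_block_events N)"
    then obtain N1 N2 where "N1 \<ge> 2" "a \<in> tail_block_events N1" "b \<in> tail_block_events N2" by auto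
    then have "N1 \<ge> 2" "a \<in> tail_block_events (max N1 N2)" "b \<in> tail_block_events (max N1 N2)"
      using tail_block_events_mono[of N1 "max N1 N2"] tail_block_events_mono[of N2 "max N1 N2"] by auto
    moreover have "Int_stable (tail_block_events (max N1 N2))"
      unfolding tail_block_events_def by (rule Int_stable_vimage)
    ultimately show "a \<inter> b \<in> (\<Union>N\<in>{2..}. tail_block_events N)"
      by (auto simp: Int_stable_def intro!: bexI[of _ "max N1 N2"])
  qed
  then show ?thesis unfolding limit_events_def by (auto intro: Int_stable_vimage)
qed

lemma limit_events_subset_block_events:
  assumes N: "N \<ge> 2" and k: "k \<in> {0, 1}"
  shows "limit_events k \<subseteq> {block_var N k -` B \<inter> space M | B. B \<in> sets (\<Pi>\<^sub>M j\<in>block N k. lborel)}"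
proof -
  have "(\<lambda>\<omega>. block_var N k \<omega> k) = (if k = 0 then x0 else \<xi> 1)"
    using k by (auto simp: block_var_def block_def)
  then have "limit_events k = {(\<lambda>\<omega>. block_var N k \<omega> k) -` A \<inter> space M | A. A \<in> sets lborel}"
    using k by (auto simp: limit_events_def)
  also have "\<dots> \<subseteq> {block_var N k -` B \<inter> space M | B. B \<in> sets (\<Pi>\<^sub>M j\<in>block N k. lborel)}"
    using k by (intro vimage_events_compose_subset[OF measurable_block_var[OF N]
        measurable_component_singleton]) (auto simp: block_def)
  finally show ?thesis .
qed

lemma indep_sets_limit_events: "prob_space.indep_sets M limit_events {0, 1, 2}"
proof -
  interpret prob_space M by (rule prob)
  show ?thesis
    unfolding indep_sets_def
  proof (intro conjI ballI allI impI)
    fix i assume "i \<in> {0, 1, 2::nat}"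
    then consider "i = 0" | "i = 1" | "i = 2" by auto
    then show "limit_events i \<subseteq> events"
      using measurable_x0_xi1 by cases (auto simp: limit_events_def tail_block_events_def)
  next
    fix J A assume J: "J \<subseteq> {0, 1, 2}" "J \<noteq> {}" "finite J" and A: "A \<in> Pi J limit_events"
    \<comment> \<open>only the tail event may need a long block, so one \<open>N\<close> serves all of \<open>J\<close>\<close>
    obtain N where N: "N \<ge> 2" and AN: "2 \<in> J \<Longrightarrow> A 2 \<in> tail_block_events N"
    proof (cases "2 \<in> J")
      case True
      then have "A 2 \<in> (\<Union>N\<in>{2..}. tail_block_events N)"
        using Pi_mem[OF A True] by (simp add: limit_events_def)
      then show ?thesis using that by blast
    qed (use that[of 2] in blast)
    have "A \<in> Pi J (\<lambda>k. {block_var N k -` B \<inter> space M | B. B \<in> sets (\<Pi>\<^sub>M j\<in>block N k. lborel)})"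
    proof
      fix j assume j: "j \<in> J"
      then consider "j \<in> {0, 1}" | "j = 2" using J by auto
      then show "A j \<in> {block_var N j -` B \<inter> space M | B. B \<in> sets (\<Pi>\<^sub>M j\<in>block N j. lborel)}"
      proof cases
        case 1 then show ?thesis using A j limit_events_subset_block_events[OF N] by auto
      next
        case 2 then show ?thesis using AN j by (auto simp: tail_block_events_def block_var_tail block_def)
      qed
    qed
    then show "prob (\<Inter>j\<in>J. A j) = (\<Prod>j\<in>J. prob (A j))"
      using indep_vars_block_var[OF N] J unfolding indep_vars_def2 indep_sets_def by blast
  qed
qed


definition tail_sigma :: "'a measure" where
  "tail_sigma = sigma (space M) (limit_events 2)"

lemma space_tail_sigma: "space tail_sigma = space M"
  and sets_tail_sigma: "sets tail_sigma = sigma_sets (space M) (limit_events 2)"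
proof -
  have "limit_events 2 \<subseteq> Pow (space M)"
    using sets.sets_into_space by (auto simp: limit_events_def tail_block_events_def)
  then show "space tail_sigma = space M" "sets tail_sigma = sigma_sets (space M) (limit_events 2)"
    unfolding tail_sigma_def by auto
qed

lemma measurable_tail_sigma:
  fixes h :: "(nat \<Rightarrow> real) \<Rightarrow> real"
  assumes N: "N \<ge> 2" and h: "h \<in> borel_measurable (\<Pi>\<^sub>M j\<in>{2..N}. lborel)"
  shows "(\<lambda>\<omega>. h (tail N \<omega>)) \<in> borel_measurable tail_sigma"
proof (rule measurableI)
  fix A :: "real set" assume "A \<in> sets borel"
  moreover have "{(\<lambda>\<omega>. h (tail N \<omega>)) -` A \<inter> space M | A. A \<in> sets borel} \<subseteq> tail_block_events N"
    unfolding tail_block_events_def by (rule vimage_events_compose_subset[OF measurable_tail h]) simp_all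
  ultimately have "(\<lambda>\<omega>. h (tail N \<omega>)) -` A \<inter> space M \<in> limit_events 2"
    using N by (auto simp: limit_events_def)
  then show "(\<lambda>\<omega>. h (tail N \<omega>)) -` A \<inter> space tail_sigma \<in> sets tail_sigma"
    by (simp add: space_tail_sigma sets_tail_sigma)
qed simp

lemma indep_vars_tail_sigma:
  assumes [measurable]: "R \<in> borel_measurable M" and R_tail: "R \<in> borel_measurable tail_sigma"
  shows "prob_space.indep_vars M (\<lambda>_. lborel) (\<lambda>k. if k = 0 then x0 else if k = 1 then \<xi> 1 else R) {0, 1, 2::nat}"
proof -
  interpret prob_space M by (rule prob)
  have indep_sigma: "indep_sets (\<lambda>k. sigma_sets (space M) (limit_events k)) {0, 1, 2}"
    by (intro indep_sets_sigma indep_sets_limit_events Int_stable_limit_events)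
  show ?thesis
    unfolding indep_vars_def2
  proof (intro conjI ballI)
    fix i :: nat assume "i \<in> {0, 1, 2}"
    then show "random_variable lborel (if i = 0 then x0 else if i = 1 then \<xi> 1 else R)"
      using measurable_x0_xi1 by (auto simp: One_nat_def)
  next
    show "indep_sets (\<lambda>i. {(if i = 0 then x0 else if i = 1 then \<xi> 1 else R) -` A \<inter> space M |A. A \<in> sets lborel})
        {0, 1, 2::nat}"
    proof (rule indep_sets_mono_sets[OF indep_sigma])
      fix i :: nat assume "i \<in> {0, 1, 2}"
      then consider "i = 0" | "i = 1" | "i = 2" by auto
      then show "{(if i = 0 then x0 else if i = 1 then \<xi> 1 else R) -` A \<inter> space M |A. A \<in> sets lborel}
          \<subseteq> sigma_sets (space M) (limit_events i)"
      proof cases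
        case 3
        have "R -` A \<inter> space M \<in> sigma_sets (space M) (limit_events 2)" if "A \<in> sets borel" for A
          using measurable_sets[OF R_tail that] by (simp add: space_tail_sigma sets_tail_sigma)
        then show ?thesis using 3 by auto
      qed (auto simp: limit_events_def intro: sigma_sets.Basic)
    qed
  qed
qed

text \<open>Along an a.e. convergent subsequence the pointwise limit is a version of \<open>R\<close> that is
  measurable for the \<open>\<sigma>\<close>-algebra of all finite tails.\<close>
lemma indep_vars_tail_limit:
  fixes h :: "nat \<Rightarrow> (nat \<Rightarrow> real) \<Rightarrow> real" and R :: "'a \<Rightarrow> real"
  assumes h: "\<And>N. N \<ge> 2 \<Longrightarrow> h N \<in> borel_measurable (\<Pi>\<^sub>M j\<in>{2..N}. lborel)"
    and [measurable]: "R \<in> borel_measurable M"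
    and int: "\<And>N. N \<ge> 2 \<Longrightarrow> integrable M (\<lambda>\<omega>. h N (tail N \<omega>) - R \<omega>)"
    and conv: "(\<lambda>N. \<integral>\<omega>. \<bar>h N (tail N \<omega>) - R \<omega>\<bar> \<partial>M) \<longlonglongrightarrow> 0"
  obtains R' where "R' \<in> borel_measurable M" and "AE \<omega> in M. R \<omega> = R' \<omega>"
    and "prob_space.indep_vars M (\<lambda>_. lborel) (\<lambda>k. if k = 0 then x0 else if k = 1 then \<xi> 1 else R') {0, 1, 2::nat}"
proof -
  interpret prob_space M by (rule prob)
  define RN where "RN n \<omega> = h (n + 2) (tail (n + 2) \<omega>)" for n \<omega>
  have [measurable]: "RN n \<in> borel_measurable M" for n
    unfolding RN_def using measurable_compose[OF measurable_tail h[of "n + 2"]] by simp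
  have "(\<lambda>n. \<integral>\<omega>. norm (RN n \<omega> - R \<omega>) \<partial>M) \<longlonglongrightarrow> 0"
    using LIMSEQ_ignore_initial_segment[OF conv, of 2] by (simp add: RN_def)
  from tendsto_L1_AE_subseq[OF _ this] int
  obtain r :: "nat \<Rightarrow> nat" where subseq: "AE \<omega> in M. (\<lambda>n. RN (r n) \<omega> - R \<omega>) \<longlonglongrightarrow> 0"
    by (auto simp: RN_def)
  define R' where "R' \<omega> = lim (\<lambda>n. RN (r n) \<omega>)" for \<omega>
  have "R' \<in> borel_measurable M"
    unfolding R'_def by (rule borel_measurable_lim_metric) simp
  moreover have "R' \<in> borel_measurable tail_sigma"
    unfolding R'_def RN_def by (intro borel_measurable_lim_metric measurable_tail_sigma h) simp_all
  moreover from subseq have "AE \<omega> in M. R \<omega> = R' \<omega>"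
  proof eventually_elim
    case (elim \<omega>)
    then have "(\<lambda>n. RN (r n) \<omega> - R \<omega> + R \<omega>) \<longlonglongrightarrow> 0 + R \<omega>" by (intro tendsto_add) auto
    then show ?case unfolding R'_def by (simp add: limI)
  qed
  ultimately show ?thesis using that indep_vars_tail_sigma by blast
qed

end

section \<open>Convergence of the truncated exponent\<close>

lemma integrable_square_add:
  fixes f g :: "'a \<Rightarrow> real"
  assumes [measurable]: "f \<in> borel_measurable N" "g \<in> borel_measurable N"
    and "integrable N (\<lambda>x. (f x)\<^sup>2)" "integrable N (\<lambda>x. (g x)\<^sup>2)"
  shows "integrable N (\<lambda>x. (f x + g x)\<^sup>2)"
proof (rule Bochner_Integration.integrable_bound)
  show "integrable N (\<lambda>x. 2 * (f x)\<^sup>2 + 2 * (g x)\<^sup>2)" using assms(3,4) by auto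
  have "(f x + g x)\<^sup>2 \<le> 2 * (f x)\<^sup>2 + 2 * (g x)\<^sup>2" for x
    using zero_le_power2[of "f x - g x"] by (simp add: power2_eq_square algebra_simps)
  then show "AE x in N. norm ((f x + g x)\<^sup>2) \<le> norm (2 * (f x)\<^sup>2 + 2 * (g x)\<^sup>2)"
    by (intro AE_I2) simp
qed measurable

lemma integrable_square_cmult:
  fixes f :: "'a \<Rightarrow> real"
  assumes "integrable N (\<lambda>x. (f x)\<^sup>2)"
  shows "integrable N (\<lambda>x. (c * f x)\<^sup>2)"
  using integrable_mult_right[OF assms, of "c\<^sup>2"] by (simp add: power_mult_distrib)

lemma integrable_square_diff:
  fixes f g :: "'a \<Rightarrow> real"
  assumes "f \<in> borel_measurable N" "g \<in> borel_measurable N"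
    and "integrable N (\<lambda>x. (f x)\<^sup>2)" "integrable N (\<lambda>x. (g x)\<^sup>2)"
  shows "integrable N (\<lambda>x. (f x - g x)\<^sup>2)"
  using integrable_square_add[of f N "\<lambda>x. - g x"] assms by simp

lemma integrable_square_sum:
  fixes f :: "nat \<Rightarrow> 'a \<Rightarrow> real"
  assumes "finite S" and "\<And>j. j \<in> S \<Longrightarrow> f j \<in> borel_measurable N"
    and "\<And>j. j \<in> S \<Longrightarrow> integrable N (\<lambda>x. (f j x)\<^sup>2)"
  shows "integrable N (\<lambda>x. (\<Sum>j\<in>S. f j x)\<^sup>2)"
  using assms
proof (induction S rule: finite_induct)
  case (insert j S)
  then show ?case by (simp add: integrable_square_add borel_measurable_sum)
qed simp

lemma integrable_mult_fst_snd:
  fixes f :: "'a \<Rightarrow> real" and g :: "'b \<Rightarrow> real"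
  assumes "pair_sigma_finite M1 M2" and f: "integrable M1 f" and g: "integrable M2 g"
  shows "integrable (M1 \<Otimes>\<^sub>M M2) (\<lambda>p. f (fst p) * g (snd p))"
proof (rule pair_sigma_finite.Fubini_integrable[OF assms(1)])
  have [measurable]: "f \<in> borel_measurable M1" "g \<in> borel_measurable M2" using f g by auto
  show "(\<lambda>p. f (fst p) * g (snd p)) \<in> borel_measurable (M1 \<Otimes>\<^sub>M M2)" by measurable
  show "integrable M1 (\<lambda>x. \<integral>y. norm (f (fst (x, y)) * g (snd (x, y))) \<partial>M2)"
    using f by (simp add: abs_mult)
  show "AE x in M1. integrable M2 (\<lambda>y. f (fst (x, y)) * g (snd (x, y)))"
    using g by auto
qed

lemma (in finite_measure) tendsto_L1_of_tendsto_L2: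
  fixes f :: "nat \<Rightarrow> 'a \<Rightarrow> real"
  assumes [measurable]: "\<And>n. f n \<in> borel_measurable M" and sq: "\<And>n. integrable M (\<lambda>x. (f n x)\<^sup>2)"
    and conv: "(\<lambda>n. \<integral>x. (f n x)\<^sup>2 \<partial>M) \<longlonglongrightarrow> 0"
  shows "(\<lambda>n. \<integral>x. \<bar>f n x\<bar> \<partial>M) \<longlonglongrightarrow> 0"
proof (rule LIMSEQ_I)
  fix r :: real assume r: "r > 0"
  define V where "V = measure M (space M)"
  define e where "e = r / (2 * (V + 1))"
  have V: "V \<ge> 0" by (simp add: V_def)
  then have e: "e > 0" using r by (simp add: e_def)
  obtain n0 where n0: "\<And>n. n \<ge> n0 \<Longrightarrow> (\<integral>x. (f n x)\<^sup>2 \<partial>M) < e * (r / 2)"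
    using order_tendstoD(2)[OF conv, of "e * (r / 2)"] e r by (auto simp: eventually_sequentially)
  have bound: "\<bar>y\<bar> \<le> e + y\<^sup>2 / e" for y :: real
  proof (cases "\<bar>y\<bar> \<le> e")
    case False
    then have "e * \<bar>y\<bar> \<le> \<bar>y\<bar> * \<bar>y\<bar>" by (intro mult_right_mono) auto
    then have "\<bar>y\<bar> \<le> y\<^sup>2 / e" using e by (simp add: field_simps power2_eq_square)
    then show ?thesis using e by linarith
  qed (use e in \<open>simp add: add_increasing2\<close>)
  have "(\<integral>x. \<bar>f n x\<bar> \<partial>M) < r" if "n \<ge> n0" for n
  proof -
    have int: "integrable M (\<lambda>x. e + (f n x)\<^sup>2 / e)" using sq by auto
    have "(\<integral>x. \<bar>f n x\<bar> \<partial>M) \<le> (\<integral>x. e + (f n x)\<^sup>2 / e \<partial>M)"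
      using sq by (intro integral_mono int square_integrable_imp_integrable[THEN integrable_abs] bound) auto
    also have "\<dots> = e * V + (\<integral>x. (f n x)\<^sup>2 \<partial>M) / e"
      using sq by (simp add: V_def mult.commute)
    also have "\<dots> < e * (V + 1) + r / 2"
    proof -
      have "(\<integral>x. (f n x)\<^sup>2 \<partial>M) / e < r / 2" using n0[OF that] e by (simp add: field_simps)
      moreover have "e * V \<le> e * (V + 1)" using e by simp
      ultimately show ?thesis by linarith
    qed
    also have "\<dots> = r" using V by (simp add: e_def field_simps)
    finally show ?thesis .
  qed
  moreover have "(\<integral>x. \<bar>f n x\<bar> \<partial>M) \<ge> 0" for n by (rule integral_nonneg_AE) simp
  ultimately show "\<exists>n0. \<forall>n\<ge>n0. norm ((\<integral>x. \<bar>f n x\<bar> \<partial>M) - 0) < r" by auto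
qed

lemma set_integral_sum:
  fixes f :: "nat \<Rightarrow> real \<Rightarrow> real"
  assumes "finite S" and "\<And>j. j \<in> S \<Longrightarrow> set_integrable M A (f j)"
  shows "set_integrable M A (\<lambda>x. \<Sum>j\<in>S. f j x) \<and>
    (LINT x:A|M. (\<Sum>j\<in>S. f j x)) = (\<Sum>j\<in>S. LINT x:A|M. f j x)"
  using assms
proof (induction S rule: finite_induct)
  case empty then show ?case by (simp add: set_integrable_def set_lebesgue_integral_def)
next
  case (insert j S)
  then show ?case by (simp add: set_integral_add)
qed

lemma (in prob_space) square_integral_le_integral_square:
  fixes f :: "'a \<Rightarrow> real"
  assumes [measurable]: "f \<in> borel_measurable M" and sq: "integrable M (\<lambda>x. (f x)\<^sup>2)"
  shows "(\<integral>x. f x \<partial>M)\<^sup>2 \<le> (\<integral>x. (f x)\<^sup>2 \<partial>M)"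
proof -
  have "integrable M f" by (rule square_integrable_imp_integrable[OF _ sq]) simp
  then show ?thesis using variance_positive[of f] variance_eq[of f] sq by simp
qed

lemma set_integral_mono_set:
  fixes f :: "'a \<Rightarrow> real"
  assumes "set_integrable M B f" "A \<in> sets M" "A \<subseteq> B" and "\<And>x. x \<in> B \<Longrightarrow> 0 \<le> f x"
  shows "(LINT x:A|M. f x) \<le> (LINT x:B|M. f x)"
  using set_integrable_subset[OF assms(1-3)] assms(1,3,4) unfolding set_lebesgue_integral_def set_integrable_def
  by (intro integral_mono) (auto simp: indicator_def)

locale KL_process =
  fixes M :: "'a measure" and t0 T :: real and a :: "real \<Rightarrow> 'a \<Rightarrow> real"
    and \<nu> :: "nat \<Rightarrow> real" and \<phi> :: "nat \<Rightarrow> real \<Rightarrow> real" and \<xi> :: "nat \<Rightarrow> 'a \<Rightarrow> real"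
  assumes prob: "prob_space M" and t0_less: "t0 < T"
    and measurable_a: "(\<lambda>p. a (fst p) (snd p)) \<in> borel_measurable (time_prod t0 T M)"
    and square_integrable_a: "integrable (time_prod t0 T M) (\<lambda>p. (a (fst p) (snd p))\<^sup>2)"
    and KL: "KL_expansion M t0 T a \<nu> \<phi> \<xi>"
begin

abbreviation "time \<equiv> restrict_space lborel {t0..T}"

lemma time_prod_eq: "time_prod t0 T M = time \<Otimes>\<^sub>M M"
  by (simp add: time_prod_def)

lemma finite_measure_time: "finite_measure time"
  using t0_less by (intro finite_measureI) (simp add: emeasure_restrict_space)

lemma pair_sigma_finite_time: "pair_sigma_finite time M"
  using finite_measure_time prob
  by (simp add: pair_sigma_finite_def finite_measure.sigma_finite_measure prob_space_imp_sigma_finite)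

lemma finite_measure_time_prod: "finite_measure (time \<Otimes>\<^sub>M M)"
  using finite_measure_pair_measure[OF prob_space.finite_measure[OF prob] finite_measure_time] .

lemma integrable_time_iff: "integrable time g \<longleftrightarrow> set_integrable lborel {t0..T} g"
  for g :: "real \<Rightarrow> real"
  unfolding set_integrable_def by (subst integrable_restrict_space) auto

lemma set_integrable_Icc:
  fixes g :: "real \<Rightarrow> real"
  assumes "integrable time g" and "t \<le> T"
  shows "set_integrable lborel {t0..t} g"
  using assms by (auto simp: integrable_time_iff intro: set_integrable_subset)

lemma measurable_phi[measurable]: "j \<ge> 1 \<Longrightarrow> \<phi> j \<in> borel_measurable time"
  and square_integrable_phi: "j \<ge> 1 \<Longrightarrow> integrable time (\<lambda>s. (\<phi> j s)\<^sup>2)"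
  using KL by (auto simp: KL_expansion_def L2_interval_def integrable_time_iff)

lemma measurable_xi[measurable]: "j \<ge> 1 \<Longrightarrow> \<xi> j \<in> borel_measurable M"
  and square_integrable_xi: "j \<ge> 1 \<Longrightarrow> integrable M (\<lambda>\<omega>. (\<xi> j \<omega>)\<^sup>2)"
  using KL by (auto simp: KL_expansion_def)

lemma integrable_phi: "j \<ge> 1 \<Longrightarrow> integrable time (\<phi> j)"
  by (rule finite_measure.square_integrable_imp_integrable[OF finite_measure_time])
    (simp_all add: square_integrable_phi)

lemma measurable_a_time[measurable]: "(\<lambda>p. a (fst p) (snd p)) \<in> borel_measurable (time \<Otimes>\<^sub>M M)"
  using measurable_a by (simp add: time_prod_eq)

lemma measurable_mean[measurable]: "proc_mean M a \<in> borel_measurable time"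
proof -
  have "(\<lambda>(s, \<omega>). a s \<omega>) \<in> borel_measurable (time \<Otimes>\<^sub>M M)"
    by (simp add: split_beta')
  then show ?thesis unfolding proc_mean_def
    by (rule sigma_finite_measure.borel_measurable_lebesgue_integral[OF prob_space_imp_sigma_finite[OF prob]])
qed

lemma square_integrable_mean: "integrable time (\<lambda>s. (proc_mean M a s)\<^sup>2)"
proof (rule Bochner_Integration.integrable_bound)
  have a: "integrable (time \<Otimes>\<^sub>M M) (\<lambda>p. (a (fst p) (snd p))\<^sup>2)"
    using square_integrable_a by (simp add: time_prod_eq)
  show "integrable time (\<lambda>s. \<integral>\<omega>. (a s \<omega>)\<^sup>2 \<partial>M)"
    using pair_sigma_finite.integrable_fst'[OF pair_sigma_finite_time a] by simp
  have "AE s in time. integrable M (\<lambda>\<omega>. (a s \<omega>)\<^sup>2)"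
    using pair_sigma_finite.AE_integrable_fst'[OF pair_sigma_finite_time a] by simp
  then show "AE s in time. norm ((proc_mean M a s)\<^sup>2) \<le> norm (\<integral>\<omega>. (a s \<omega>)\<^sup>2 \<partial>M)"
  proof (rule AE_mp, intro AE_I2 impI)
    fix s assume s: "s \<in> space time" and int: "integrable M (\<lambda>\<omega>. (a s \<omega>)\<^sup>2)"
    have [measurable]: "a s \<in> borel_measurable M"
      using measurable_Pair2[OF measurable_a_time, of s] s by simp
    have "(proc_mean M a s)\<^sup>2 \<le> (\<integral>\<omega>. (a s \<omega>)\<^sup>2 \<partial>M)"
      unfolding proc_mean_def using prob_space.square_integral_le_integral_square[OF prob _ int] by simp
    then show "norm ((proc_mean M a s)\<^sup>2) \<le> norm (\<integral>\<omega>. (a s \<omega>)\<^sup>2 \<partial>M)" by simp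
  qed
qed measurable

lemma integrable_mean: "integrable time (proc_mean M a)"
  by (rule finite_measure.square_integrable_imp_integrable[OF finite_measure_time measurable_mean
        square_integrable_mean])


definition KL_remainder :: "nat \<Rightarrow> real \<times> 'a \<Rightarrow> real" where
  "KL_remainder N p = a (fst p) (snd p) - proc_mean M a (fst p)
     - (\<Sum>j=1..N. sqrt (\<nu> j) * \<phi> j (fst p) * \<xi> j (snd p))"

lemma measurable_KL_remainder[measurable]: "KL_remainder N \<in> borel_measurable (time \<Otimes>\<^sub>M M)"
  unfolding KL_remainder_def by measurable

lemma square_integrable_KL_remainder: "integrable (time \<Otimes>\<^sub>M M) (\<lambda>p. (KL_remainder N p)\<^sup>2)"
proof -
  have mean: "integrable (time \<Otimes>\<^sub>M M) (\<lambda>p. (proc_mean M a (fst p))\<^sup>2)"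
    using integrable_mult_fst_snd[OF pair_sigma_finite_time square_integrable_mean, of "\<lambda>_. 1"] prob
    by (simp add: prob_space_def finite_measure.integrable_const)
  have summand: "integrable (time \<Otimes>\<^sub>M M) (\<lambda>p. (sqrt (\<nu> j) * \<phi> j (fst p) * \<xi> j (snd p))\<^sup>2)"
    if "j \<in> {1..N}" for j
  proof -
    have "integrable (time \<Otimes>\<^sub>M M) (\<lambda>p. (\<phi> j (fst p))\<^sup>2 * (\<xi> j (snd p))\<^sup>2)"
      using that by (intro integrable_mult_fst_snd[OF pair_sigma_finite_time]
          square_integrable_phi square_integrable_xi) auto
    then have "integrable (time \<Otimes>\<^sub>M M) (\<lambda>p. (sqrt (\<nu> j) * (\<phi> j (fst p) * \<xi> j (snd p)))\<^sup>2)"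
      by (intro integrable_square_cmult) (simp add: power_mult_distrib)
    then show ?thesis by (simp add: mult.assoc)
  qed
  show ?thesis
    unfolding KL_remainder_def using square_integrable_a mean summand
    by (intro integrable_square_diff integrable_square_sum) (auto simp: time_prod_eq)
qed

lemma KL_remainder_L1_tendsto: "(\<lambda>N. \<integral>p. \<bar>KL_remainder N p\<bar> \<partial>(time \<Otimes>\<^sub>M M)) \<longlonglongrightarrow> 0"
proof (rule finite_measure.tendsto_L1_of_tendsto_L2[OF finite_measure_time_prod])
  show "(\<lambda>N. \<integral>p. (KL_remainder N p)\<^sup>2 \<partial>(time \<Otimes>\<^sub>M M)) \<longlonglongrightarrow> 0"
    using KL unfolding KL_expansion_def KL_remainder_def time_prod_eq by blast
qed (simp_all add: square_integrable_KL_remainder)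

definition phi_integral :: "real \<Rightarrow> nat \<Rightarrow> real" where
  "phi_integral t j = (LINT s:{t0..t}|lborel. \<phi> j s)"

definition mean_integral :: "real \<Rightarrow> real" where
  "mean_integral t = (LINT s:{t0..t}|lborel. proc_mean M a s)"

definition path_integral :: "real \<Rightarrow> 'a \<Rightarrow> real" where
  "path_integral t \<omega> = (LINT s:{t0..t}|lborel. a s \<omega>)"

definition KL_partial :: "real \<Rightarrow> nat \<Rightarrow> 'a \<Rightarrow> real" where
  "KL_partial t N \<omega> = mean_integral t + (\<Sum>j=1..N. sqrt (\<nu> j) * phi_integral t j * \<xi> j \<omega>)"

lemma measurable_KL_partial[measurable]: "KL_partial t N \<in> borel_measurable M"
  unfolding KL_partial_def by measurable

lemma set_integral_KL_summands:
  assumes "t \<le> T"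
  shows "set_integrable lborel {t0..t} (\<lambda>s. \<Sum>j=1..N. sqrt (\<nu> j) * \<phi> j s * y j)"
    and "(LINT s:{t0..t}|lborel. \<Sum>j=1..N. sqrt (\<nu> j) * \<phi> j s * y j)
      = (\<Sum>j=1..N. sqrt (\<nu> j) * phi_integral t j * y j)"
proof -
  have int: "set_integrable lborel {t0..t} (\<lambda>s. sqrt (\<nu> j) * \<phi> j s * y j)" if "j \<in> {1..N}" for j
  proof -
    have "set_integrable lborel {t0..t} (\<phi> j)"
      using that by (intro set_integrable_Icc[OF integrable_phi assms]) auto
    then show ?thesis
      using set_integrable_mult_right[of "sqrt (\<nu> j) * y j" lborel "{t0..t}" "\<phi> j"] by (simp add: mult_ac)
  qed
  show "set_integrable lborel {t0..t} (\<lambda>s. \<Sum>j=1..N. sqrt (\<nu> j) * \<phi> j s * y j)"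
    using set_integral_sum[of "{1..N}" lborel "{t0..t}" "\<lambda>j s. sqrt (\<nu> j) * \<phi> j s * y j", OF _ int] by auto
  show "(LINT s:{t0..t}|lborel. \<Sum>j=1..N. sqrt (\<nu> j) * \<phi> j s * y j)
      = (\<Sum>j=1..N. sqrt (\<nu> j) * phi_integral t j * y j)"
    using set_integral_sum[of "{1..N}" lborel "{t0..t}" "\<lambda>j s. sqrt (\<nu> j) * \<phi> j s * y j", OF _ int] by (simp add: phi_integral_def)
qed

lemma K_a_eq:
  assumes "t \<le> T"
  shows "K_a M t0 a \<nu> \<phi> N t y = mean_integral t + (\<Sum>j=1..N. sqrt (\<nu> j) * phi_integral t j * y j)"
  using set_integral_KL_summands[OF assms] set_integrable_Icc[OF integrable_mean assms]
  by (simp add: K_a_def mean_integral_def)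

lemma measurable_path_integral[measurable]:
  assumes "t \<le> T"
  shows "path_integral t \<in> borel_measurable M"
proof -
  have eq: "path_integral t \<omega> = (\<integral>s. indicator {t0..t} s * a s \<omega> \<partial>time)" for \<omega>
    unfolding path_integral_def set_lebesgue_integral_def using assms
    by (subst integral_restrict_space) (auto intro!: Bochner_Integration.integral_cong simp: indicator_def)
  have [measurable]: "(indicator {t0..t} :: real \<Rightarrow> real) \<in> borel_measurable time"
    by (rule measurable_restrict_space1) measurable
  have "(\<lambda>(\<omega>, s). indicator {t0..t} s * a s \<omega>) \<in> borel_measurable (M \<Otimes>\<^sub>M time)"
    by (subst measurable_pair_swap_iff) (simp add: split_beta')
  then have "(\<lambda>\<omega>. \<integral>s. indicator {t0..t} s * a s \<omega> \<partial>time) \<in> borel_measurable M"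
    by (rule sigma_finite_measure.borel_measurable_lebesgue_integral[OF
          finite_measure.sigma_finite_measure[OF finite_measure_time]])
  then show ?thesis by (simp add: eq[abs_def])
qed


lemma path_integral_minus_KL_partial:
  assumes t: "t \<le> T"
  shows "AE \<omega> in M. path_integral t \<omega> - KL_partial t N \<omega> = (LINT s:{t0..t}|lborel. KL_remainder N (s, \<omega>))"
proof -
  have "integrable (time \<Otimes>\<^sub>M M) (\<lambda>p. a (fst p) (snd p))"
    using finite_measure.square_integrable_imp_integrable[OF finite_measure_time_prod measurable_a_time]
      square_integrable_a by (simp add: time_prod_eq)
  then have "integrable (time \<Otimes>\<^sub>M M) (\<lambda>(s, \<omega>). a s \<omega>)" by (simp add: split_beta')
  then have "AE \<omega> in M. integrable time (\<lambda>s. a s \<omega>)"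
    by (rule pair_sigma_finite.AE_integrable_snd[OF pair_sigma_finite_time])
  then show ?thesis
  proof eventually_elim
    case (elim \<omega>)
    have "set_integrable lborel {t0..t} (\<lambda>s. a s \<omega>)"
      by (rule set_integrable_Icc[OF elim t])
    then show ?case
      using set_integral_KL_summands[OF t, where N=N and y="\<lambda>j. \<xi> j \<omega>"] set_integrable_Icc[OF integrable_mean t]
      by (simp add: KL_remainder_def KL_partial_def path_integral_def mean_integral_def set_integral_diff)
  qed
qed

lemma KL_partial_tendsto_L1:
  assumes t: "t \<le> T"
  shows "integrable M (\<lambda>\<omega>. KL_partial t N \<omega> - path_integral t \<omega>)"
    and "(\<lambda>N. \<integral>\<omega>. \<bar>KL_partial t N \<omega> - path_integral t \<omega>\<bar> \<partial>M) \<longlonglongrightarrow> 0"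
proof -
  define g where "g N \<omega> = (\<integral>s. \<bar>KL_remainder N (s, \<omega>)\<bar> \<partial>time)" for N \<omega>
  have "integrable (time \<Otimes>\<^sub>M M) (KL_remainder N)" for N
    by (rule finite_measure.square_integrable_imp_integrable[OF finite_measure_time_prod
        measurable_KL_remainder square_integrable_KL_remainder])
  then have int_remainder: "integrable (time \<Otimes>\<^sub>M M) (\<lambda>(s, \<omega>). KL_remainder N (s, \<omega>))"
    and int_abs: "integrable (time \<Otimes>\<^sub>M M) (\<lambda>(s, \<omega>). \<bar>KL_remainder N (s, \<omega>)\<bar>)" for N
    by (simp_all add: split_beta')
  have int_g: "integrable M (g N)" and integral_g: "(\<integral>\<omega>. g N \<omega> \<partial>M) = (\<integral>p. \<bar>KL_remainder N p\<bar> \<partial>(time \<Otimes>\<^sub>M M))"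
    for N
    using pair_sigma_finite.integrable_snd[OF pair_sigma_finite_time int_abs[of N]]
      pair_sigma_finite.integral_snd[OF pair_sigma_finite_time int_abs[of N]]
    unfolding g_def by (simp_all add: split_beta')
  have bound: "AE \<omega> in M. \<bar>KL_partial t N \<omega> - path_integral t \<omega>\<bar> \<le> g N \<omega>" for N
    using path_integral_minus_KL_partial[OF t, of N]
      pair_sigma_finite.AE_integrable_snd[OF pair_sigma_finite_time int_remainder[of N]]
  proof eventually_elim
    case (elim \<omega>)
    have int: "set_integrable lborel {t0..T} (\<lambda>s. \<bar>KL_remainder N (s, \<omega>)\<bar>)"
      using elim(2) by (simp add: integrable_time_iff[symmetric])
    have "\<bar>KL_partial t N \<omega> - path_integral t \<omega>\<bar> = norm (LINT s:{t0..t}|lborel. KL_remainder N (s, \<omega>))"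
      using elim(1) by simp
    also have "\<dots> \<le> (LINT s:{t0..t}|lborel. \<bar>KL_remainder N (s, \<omega>)\<bar>)"
      using set_integral_norm_bound[OF set_integrable_Icc[OF elim(2) t]] by simp
    also have "\<dots> \<le> (LINT s:{t0..T}|lborel. \<bar>KL_remainder N (s, \<omega>)\<bar>)"
      using t by (intro set_integral_mono_set[OF int]) auto
    also have "\<dots> = g N \<omega>"
      unfolding g_def set_lebesgue_integral_def by (subst integral_restrict_space) (auto simp: mult.commute)
    finally show ?case .
  qed
  have int: "integrable M (\<lambda>\<omega>. KL_partial t N \<omega> - path_integral t \<omega>)" for N
  proof (rule Bochner_Integration.integrable_bound[OF int_g[of N]])
    have g_nonneg: "g N \<omega> \<ge> 0" for \<omega> unfolding g_def by (rule integral_nonneg_AE) simp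
    show "AE \<omega> in M. norm (KL_partial t N \<omega> - path_integral t \<omega>) \<le> norm (g N \<omega>)"
      using bound[of N] by eventually_elim (simp add: g_nonneg)
  qed (use t in simp)
  then show "integrable M (\<lambda>\<omega>. KL_partial t N \<omega> - path_integral t \<omega>)" .
  show "(\<lambda>N. \<integral>\<omega>. \<bar>KL_partial t N \<omega> - path_integral t \<omega>\<bar> \<partial>M) \<longlonglongrightarrow> 0"
  proof (rule tendsto_sandwich[OF _ _ tendsto_const KL_remainder_L1_tendsto])
    show "\<forall>\<^sub>F N in sequentially. (\<integral>\<omega>. \<bar>KL_partial t N \<omega> - path_integral t \<omega>\<bar> \<partial>M)
        \<le> (\<integral>p. \<bar>KL_remainder N p\<bar> \<partial>(time \<Otimes>\<^sub>M M))"
      using bound by (intro always_eventually allI) (auto simp flip: integral_g intro!: integral_mono_AE int int_g)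
  qed simp
qed


lemma f1_approx_eq_expectation:
  assumes t: "t \<le> T"
    and d: "distributed M (\<Pi>\<^sub>M j\<in>{1..N}. lborel) (\<lambda>\<omega>. \<lambda>j\<in>{1..N}. \<xi> j \<omega>) (\<lambda>y. ennreal (fxi N y))"
    and fxi_nonneg: "\<And>y. fxi N y \<ge> 0"
    and [measurable]: "f0 \<in> borel_measurable borel" and f0_nonneg: "\<And>x. f0 x \<ge> 0"
  shows "f1_approx M t0 a \<nu> \<phi> f0 fxi N x t
       = enn2real (\<integral>\<^sup>+\<omega>. ennreal (f0 (x * exp (- KL_partial t N \<omega>)) * exp (- KL_partial t N \<omega>)) \<partial>M)"
proof -
  let ?P = "\<Pi>\<^sub>M j\<in>{1..N}. (lborel :: real measure)"
  let ?X = "\<lambda>\<omega>. \<lambda>j\<in>{1..N}. \<xi> j \<omega>"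
  define F where "F y = f0 (x * exp (- K_a M t0 a \<nu> \<phi> N t y)) * exp (- K_a M t0 a \<nu> \<phi> N t y)" for y
  have F_measurable[measurable]: "F \<in> borel_measurable ?P"
    unfolding F_def K_a_eq[OF t] by measurable
  have X_measurable: "?X \<in> M \<rightarrow>\<^sub>M ?P" and [measurable]: "(\<lambda>y. ennreal (fxi N y)) \<in> borel_measurable ?P"
    using d by (simp_all add: distributed_def)
  then have "(\<lambda>y. enn2real (ennreal (fxi N y))) \<in> borel_measurable ?P" by measurable
  then have fxi_measurable[measurable]: "fxi N \<in> borel_measurable ?P" using fxi_nonneg by simp
  have "f1_approx M t0 a \<nu> \<phi> f0 fxi N x t = (\<integral>y. fxi N y *\<^sub>R F y \<partial>?P)"
    unfolding f1_approx_def F_def by (simp add: mult_ac)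
  also have "\<dots> = integral\<^sup>L (density ?P (\<lambda>y. ennreal (fxi N y))) F"
    by (rule integral_density[symmetric, OF F_measurable fxi_measurable]) (simp add: fxi_nonneg)
  also have "\<dots> = integral\<^sup>L (distr M ?P ?X) F"
    using d by (simp add: distributed_def)
  also have "\<dots> = (\<integral>\<omega>. F (?X \<omega>) \<partial>M)"
    by (rule integral_distr[OF X_measurable F_measurable])
  also have "\<dots> = (\<integral>\<omega>. f0 (x * exp (- KL_partial t N \<omega>)) * exp (- KL_partial t N \<omega>) \<partial>M)"
  proof -
    have "K_a M t0 a \<nu> \<phi> N t (?X \<omega>) = KL_partial t N \<omega>" for \<omega>
      unfolding K_a_eq[OF t] KL_partial_def by (intro arg_cong2[where f="(+)"] refl sum.cong) auto
    then show ?thesis by (simp add: F_def)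
  qed
  also have "\<dots> = enn2real (\<integral>\<^sup>+\<omega>. ennreal (f0 (x * exp (- KL_partial t N \<omega>)) * exp (- KL_partial t N \<omega>)) \<partial>M)"
    by (rule integral_eq_nn_integral) (auto simp: f0_nonneg)
  finally show ?thesis .
qed

end

locale KL_model = KL_process M t0 T a \<nu> \<phi> \<xi> + block_independence M x0 \<xi>
  for M :: "'a measure" and t0 T a \<nu> \<phi> \<xi> and x0 :: "'a \<Rightarrow> real"
begin

definition tail_shift :: "real \<Rightarrow> nat \<Rightarrow> (nat \<Rightarrow> real) \<Rightarrow> real" where
  "tail_shift t N y = mean_integral t + (\<Sum>j=2..N. sqrt (\<nu> j) * phi_integral t j * y j)"

lemma measurable_tail_shift: "tail_shift t N \<in> borel_measurable (\<Pi>\<^sub>M j\<in>{2..N}. lborel)"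
  unfolding tail_shift_def by measurable

lemma KL_partial_split:
  "N \<ge> 1 \<Longrightarrow> KL_partial t N \<omega> = sqrt (\<nu> 1) * phi_integral t 1 * \<xi> 1 \<omega> + tail_shift t N (tail N \<omega>)"
  unfolding KL_partial_def tail_shift_def tail_def
  by (subst sum.atLeast_Suc_atMost) (auto simp: numeral_2_eq_2 intro!: sum.cong)

lemma path_integral_decomposition:
  assumes t: "t \<le> T"
  obtains R where "R \<in> borel_measurable M"
    and "AE \<omega> in M. path_integral t \<omega> = sqrt (\<nu> 1) * phi_integral t 1 * \<xi> 1 \<omega> + R \<omega>"
    and "prob_space.indep_vars M (\<lambda>_. lborel) (\<lambda>k. if k = 0 then x0 else if k = 1 then \<xi> 1 else R) {0, 1, 2::nat}"
    and "\<And>N. N \<ge> 2 \<Longrightarrow> integrable M (\<lambda>\<omega>. tail_shift t N (tail N \<omega>) - R \<omega>)"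
    and "(\<lambda>N. \<integral>\<omega>. \<bar>tail_shift t N (tail N \<omega>) - R \<omega>\<bar> \<partial>M) \<longlonglongrightarrow> 0"
proof -
  define c where "c = sqrt (\<nu> 1) * phi_integral t 1"
  define R0 where "R0 \<omega> = path_integral t \<omega> - c * \<xi> 1 \<omega>" for \<omega>
  have [measurable]: "R0 \<in> borel_measurable M" unfolding R0_def using t by measurable
  have diff: "tail_shift t N (tail N \<omega>) - R0 \<omega> = KL_partial t N \<omega> - path_integral t \<omega>" if "N \<ge> 2" for N \<omega>
    using KL_partial_split[of N t \<omega>] that by (simp add: R0_def c_def)
  have int0: "integrable M (\<lambda>\<omega>. tail_shift t N (tail N \<omega>) - R0 \<omega>)" if "N \<ge> 2" for N
    using KL_partial_tendsto_L1(1)[OF t, of N] that by (simp add: diff)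
  have "\<forall>\<^sub>F N in sequentially. (\<integral>\<omega>. \<bar>KL_partial t N \<omega> - path_integral t \<omega>\<bar> \<partial>M)
      = (\<integral>\<omega>. \<bar>tail_shift t N (tail N \<omega>) - R0 \<omega>\<bar> \<partial>M)"
    using eventually_ge_at_top[of 2] by eventually_elim (simp add: diff)
  then have conv0: "(\<lambda>N. \<integral>\<omega>. \<bar>tail_shift t N (tail N \<omega>) - R0 \<omega>\<bar> \<partial>M) \<longlonglongrightarrow> 0"
    using KL_partial_tendsto_L1(2)[OF t] by (rule Lim_transform_eventually[rotated])
  obtain R where [measurable]: "R \<in> borel_measurable M" and ae: "AE \<omega> in M. R0 \<omega> = R \<omega>"
    and indep: "prob_space.indep_vars M (\<lambda>_. lborel) (\<lambda>k. if k = 0 then x0 else if k = 1 then \<xi> 1 else R) {0, 1, 2::nat}"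
    using indep_vars_tail_limit[OF measurable_tail_shift _ int0 conv0] by auto
  have [measurable]: "(\<lambda>\<omega>. tail_shift t N (tail N \<omega>)) \<in> borel_measurable M" for N
    using measurable_compose[OF measurable_tail measurable_tail_shift] by simp
  show ?thesis
  proof
    show "AE \<omega> in M. path_integral t \<omega> = sqrt (\<nu> 1) * phi_integral t 1 * \<xi> 1 \<omega> + R \<omega>"
      using ae by eventually_elim (simp add: R0_def c_def)
    show "integrable M (\<lambda>\<omega>. tail_shift t N (tail N \<omega>) - R \<omega>)" if "N \<ge> 2" for N
      using int0[OF that] ae by (subst integrable_cong_AE[where g="\<lambda>\<omega>. tail_shift t N (tail N \<omega>) - R0 \<omega>"]) auto
    have "(\<integral>\<omega>. \<bar>tail_shift t N (tail N \<omega>) - R \<omega>\<bar> \<partial>M) = (\<integral>\<omega>. \<bar>tail_shift t N (tail N \<omega>) - R0 \<omega>\<bar> \<partial>M)" for N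
      using ae by (intro integral_cong_AE) auto
    then show "(\<lambda>N. \<integral>\<omega>. \<bar>tail_shift t N (tail N \<omega>) - R \<omega>\<bar> \<partial>M) \<longlonglongrightarrow> 0"
      using conv0 by simp
  qed (fact+)
qed

lemma f1_approx_tendsto_density:
  assumes t: "t \<le> T" and c: "sqrt (\<nu> 1) * phi_integral t 1 \<noteq> 0"
    and d0: "distributed M lborel x0 (\<lambda>x. ennreal (f0 x))" and f0_nonneg: "\<And>x. f0 x \<ge> 0"
    and d1: "distributed M lborel (\<xi> 1) (\<lambda>x. ennreal (fU x))" and fU_nonneg: "\<And>x. fU x \<ge> 0"
    and lip: "L-lipschitz_on UNIV fU"
    and dN: "\<And>N. N \<ge> 1 \<Longrightarrow>
      distributed M (\<Pi>\<^sub>M j\<in>{1..N}. lborel) (\<lambda>\<omega>. \<lambda>j\<in>{1..N}. \<xi> j \<omega>) (\<lambda>y. ennreal (fxi N y))"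
    and fxi_nonneg: "\<And>N y. N \<ge> 1 \<Longrightarrow> fxi N y \<ge> 0"
  obtains f1 where "\<And>x. f1 x \<ge> 0"
    and "distributed M lborel (\<lambda>\<omega>. x0 \<omega> * exp (path_integral t \<omega>)) (\<lambda>x. ennreal (f1 x))"
    and "\<And>\<delta> \<epsilon>. \<delta> > 0 \<Longrightarrow> \<epsilon> > 0 \<Longrightarrow> \<forall>\<^sub>F N in sequentially. \<forall>x. \<bar>x\<bar> \<ge> \<delta> \<longrightarrow>
      \<bar>f1_approx M t0 a \<nu> \<phi> f0 fxi N x t - f1 x\<bar> \<le> \<epsilon>"
proof -
  let ?c = "sqrt (\<nu> 1) * phi_integral t 1"
  obtain R where [measurable]: "R \<in> borel_measurable M"
    and ae: "AE \<omega> in M. path_integral t \<omega> = ?c * \<xi> 1 \<omega> + R \<omega>"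
    and indep: "prob_space.indep_vars M (\<lambda>_. lborel) (\<lambda>k. if k = 0 then x0 else if k = 1 then \<xi> 1 else R) {0, 1, 2::nat}"
    and int: "\<And>N. N \<ge> 2 \<Longrightarrow> integrable M (\<lambda>\<omega>. tail_shift t N (tail N \<omega>) - R \<omega>)"
    and conv: "(\<lambda>N. \<integral>\<omega>. \<bar>tail_shift t N (tail N \<omega>) - R \<omega>\<bar> \<partial>M) \<longlonglongrightarrow> 0"
    using path_integral_decomposition[OF t] by blast
  have indepN: "prob_space.indep_vars M (\<lambda>_. lborel)
      (\<lambda>k. if k = 0 then x0 else if k = 1 then \<xi> 1 else (\<lambda>\<omega>. tail_shift t N (tail N \<omega>))) {0, 1, 2::nat}"
    if "N \<ge> 2" for N
    using indep_vars_tail_function[OF that measurable_tail_shift] .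
  obtain f1 where f1_nonneg: "\<And>x. f1 x \<ge> 0"
    and dist: "distributed M lborel (\<lambda>\<omega>. x0 \<omega> * exp (?c * \<xi> 1 \<omega> + R \<omega>)) (\<lambda>x. ennreal (f1 x))"
    and approx: "\<And>\<delta> \<epsilon>. \<delta> > 0 \<Longrightarrow> \<epsilon> > 0 \<Longrightarrow> \<forall>\<^sub>F N in sequentially. \<forall>x. \<bar>x\<bar> \<ge> \<delta> \<longrightarrow>
      \<bar>enn2real (\<integral>\<^sup>+\<omega>. ennreal (f0 (x * exp (- (?c * \<xi> 1 \<omega> + tail_shift t N (tail N \<omega>))))
          * exp (- (?c * \<xi> 1 \<omega> + tail_shift t N (tail N \<omega>)))) \<partial>M) - f1 x\<bar> \<le> \<epsilon>"
    using density_mult_exp_approximation[OF prob indep indepN d0 f0_nonneg d1 fU_nonneg lip c int conv]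
    by blast
  show ?thesis
  proof
    show "f1 x \<ge> 0" for x by (rule f1_nonneg)
    have [measurable]: "x0 \<in> borel_measurable M" using d0 by (simp add: distributed_def)
    have [measurable]: "path_integral t \<in> borel_measurable M" using t by (rule measurable_path_integral)
    have "distr M lborel (\<lambda>\<omega>. x0 \<omega> * exp (path_integral t \<omega>))
        = distr M lborel (\<lambda>\<omega>. x0 \<omega> * exp (?c * \<xi> 1 \<omega> + R \<omega>))"
      using ae t by (intro distr_cong_AE) auto
    then show "distributed M lborel (\<lambda>\<omega>. x0 \<omega> * exp (path_integral t \<omega>)) (\<lambda>x. ennreal (f1 x))"
      using dist by (simp add: distributed_def)
    have f0_measurable: "f0 \<in> borel_measurable borel"
      using distributed_real_density[OF prob d0 f0_nonneg] by simp
    have f1_approx_eq: "f1_approx M t0 a \<nu> \<phi> f0 fxi N x t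
      = enn2real (\<integral>\<^sup>+\<omega>. ennreal (f0 (x * exp (- (?c * \<xi> 1 \<omega> + tail_shift t N (tail N \<omega>))))
          * exp (- (?c * \<xi> 1 \<omega> + tail_shift t N (tail N \<omega>)))) \<partial>M)" if "N \<ge> 1" for N x
      using f1_approx_eq_expectation[where fxi=fxi and N=N,
          OF t dN[OF that] fxi_nonneg[OF that] f0_measurable f0_nonneg]
      by (simp add: KL_partial_split[OF that])
    show "\<forall>\<^sub>F N in sequentially. \<forall>x. \<bar>x\<bar> \<ge> \<delta> \<longrightarrow> \<bar>f1_approx M t0 a \<nu> \<phi> f0 fxi N x t - f1 x\<bar> \<le> \<epsilon>"
      if "\<delta> > 0" "\<epsilon> > 0" for \<delta> \<epsilon>
      using approx[OF that] eventually_ge_at_top[of 1] by eventually_elim (simp add: f1_approx_eq)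
  qed
qed

end

lemma eventually_AE_outside_Icc:
  fixes P :: "'a \<Rightarrow> real \<Rightarrow> bool"
  assumes "\<forall>\<^sub>F N in F. \<forall>x. \<bar>x\<bar> \<ge> \<delta> \<longrightarrow> P N x" and "J \<inter> {-\<delta>..\<delta>} = {}"
  shows "\<forall>\<^sub>F N in F. AE x in lborel. x \<in> J \<longrightarrow> P N x"
  using assms(1)
proof (rule eventually_mono)
  have "\<bar>x\<bar> \<ge> \<delta>" if "x \<in> J" for x :: real using assms(2) that by (auto simp: abs_if)
  then show "AE x in lborel. x \<in> J \<longrightarrow> P N x" if "\<forall>x. \<bar>x\<bar> \<ge> \<delta> \<longrightarrow> P N x" for N
    using that by (intro AE_I2) blast
qed

theorem theorem5:
  fixes M :: "'a measure" and t0 T :: real and x0 :: "'a \<Rightarrow> real"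
    and a :: "real \<Rightarrow> 'a \<Rightarrow> real"
    and \<nu> :: "nat \<Rightarrow> real" and \<phi> :: "nat \<Rightarrow> real \<Rightarrow> real" and \<xi> :: "nat \<Rightarrow> 'a \<Rightarrow> real"
    and f0 :: "real \<Rightarrow> real" and fxi1 :: "real \<Rightarrow> real"
    and fxi :: "nat \<Rightarrow> (nat \<Rightarrow> real) \<Rightarrow> real"
  assumes prob: "prob_space M" and complete: "complete_measure M"
    and tT: "t0 < T"
    and H1: "(\<lambda>p. a (fst p) (snd p)) \<in> borel_measurable (time_prod t0 T M)"
            "integrable (time_prod t0 T M) (\<lambda>p. (a (fst p) (snd p))\<^sup>2)"
    and KL: "KL_expansion M t0 T a \<nu> \<phi> \<xi>" and nu1: "\<nu> 1 > 0"
    and f0_dens: "\<forall>x. f0 x \<ge> 0" "distributed M lborel x0 (\<lambda>x. ennreal (f0 x))"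
    and fxi1_dens: "\<forall>x. fxi1 x \<ge> 0" "distributed M lborel (\<xi> 1) (\<lambda>x. ennreal (fxi1 x))"
    and fxi_dens: "\<forall>N\<ge>1. (\<forall>y. fxi N y \<ge> 0) \<and>
          distributed M (\<Pi>\<^sub>M j\<in>{1..N}. lborel) (\<lambda>\<omega>. \<lambda>j\<in>{1..N}. \<xi> j \<omega>)
            (\<lambda>y. ennreal (fxi N y))"
    and H2: "\<forall>N\<ge>2. (\<exists>g. distributed M (\<Pi>\<^sub>M j\<in>{2..N}. lborel) (\<lambda>\<omega>. \<lambda>j\<in>{2..N}. \<xi> j \<omega>) g)
          \<and> prob_space.indep_vars M
              (\<lambda>k::nat. \<Pi>\<^sub>M j\<in>(if k = 0 then {0} else if k = 1 then {1} else {2..N}). lborel)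
              (\<lambda>k \<omega>. \<lambda>j\<in>(if k = 0 then {0} else if k = 1 then {1} else {2..N}).
                   (if j = 0 then x0 \<omega> else \<xi> j \<omega>))
              {0, 1, 2}"
    and H3: "\<exists>C. lipschitz_on C UNIV fxi1"
    and H4: "\<forall>t\<in>{t0<..T}. (LINT s:{t0..t}|lborel. \<phi> 1 s) \<noteq> 0"
  shows "\<forall>t\<in>{t0<..T}. \<exists>f1 :: real \<Rightarrow> real.
           (\<forall>x. f1 x \<ge> 0)
         \<and> distributed M lborel (\<lambda>\<omega>. x0 \<omega> * exp (LINT s:{t0..t}|lborel. a s \<omega>))
             (\<lambda>x. ennreal (f1 x))
         \<and> (\<forall>\<delta>>0. \<forall>J :: real set. bounded J \<and> J \<inter> {-\<delta>..\<delta>} = {} \<longrightarrow>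
              (\<forall>\<epsilon>>0. \<forall>\<^sub>F N in sequentially.
                 AE x in lborel. x \<in> J \<longrightarrow> \<bar>f1_approx M t0 a \<nu> \<phi> f0 fxi N x t - f1 x\<bar> \<le> \<epsilon>))"
proof (intro ballI)
  fix t assume t: "t \<in> {t0<..T}"
  have "\<forall>N\<ge>2. prob_space.indep_vars M
      (\<lambda>k::nat. \<Pi>\<^sub>M j\<in>(if k = 0 then {0} else if k = 1 then {1} else {2..N}). lborel)
      (\<lambda>k \<omega>. \<lambda>j\<in>(if k = 0 then {0} else if k = 1 then {1} else {2..N}). (if j = 0 then x0 \<omega> else \<xi> j \<omega>))
      {0, 1, 2}"
    using H2 by blast
  then interpret KL_model M t0 T a \<nu> \<phi> \<xi> x0
    by (intro KL_model.intro KL_process.intro block_independence.intro prob tT H1 KL)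
  obtain L where lip: "L-lipschitz_on UNIV fxi1" using H3 by blast
  have c: "sqrt (\<nu> 1) * phi_integral t 1 \<noteq> 0" using nu1 H4 t by (simp add: phi_integral_def)
  obtain f1 where f1_nonneg: "\<And>x. f1 x \<ge> 0"
    and dist: "distributed M lborel (\<lambda>\<omega>. x0 \<omega> * exp (path_integral t \<omega>)) (\<lambda>x. ennreal (f1 x))"
    and approx: "\<And>\<delta> \<epsilon>. \<delta> > 0 \<Longrightarrow> \<epsilon> > 0 \<Longrightarrow> \<forall>\<^sub>F N in sequentially. \<forall>x. \<bar>x\<bar> \<ge> \<delta> \<longrightarrow>
      \<bar>f1_approx M t0 a \<nu> \<phi> f0 fxi N x t - f1 x\<bar> \<le> \<epsilon>"
    using f1_approx_tendsto_density[OF _ c f0_dens(2) _ fxi1_dens(2) _ lip, of fxi] t f0_dens fxi1_dens fxi_dens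
    by auto
  show "\<exists>f1 :: real \<Rightarrow> real.
           (\<forall>x. f1 x \<ge> 0)
         \<and> distributed M lborel (\<lambda>\<omega>. x0 \<omega> * exp (LINT s:{t0..t}|lborel. a s \<omega>))
             (\<lambda>x. ennreal (f1 x))
         \<and> (\<forall>\<delta>>0. \<forall>J :: real set. bounded J \<and> J \<inter> {-\<delta>..\<delta>} = {} \<longrightarrow>
              (\<forall>\<epsilon>>0. \<forall>\<^sub>F N in sequentially.
                 AE x in lborel. x \<in> J \<longrightarrow> \<bar>f1_approx M t0 a \<nu> \<phi> f0 fxi N x t - f1 x\<bar> \<le> \<epsilon>))"
    using f1_nonneg dist approx[THEN eventually_AE_outside_Icc] unfolding path_integral_def by blast
qed

end
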